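(* Let $\mathcal C=\mathcal C(I,A,(\rho_i)_{i\in I},(C^a)_{a\in A})$ be a connected Cartan scheme and $\mathcal R=\mathcal R(\mathcal C,(R^a)_{a\in A})$ a root system of type $\mathcal C$. For $a\in A$ let $(R^a)^{\mathrm{re}}=\{\omega(\alpha_i)\mid\omega\in\mathrm{Hom}(b,a),\ b\in A,\ i\in I\}$. The following are equivalent: (1) $R^a$ is finite for all $a\in A$; (2) $R^a$ is finite for at least one $a\in A$; (3) $(R^a)^{\mathrm{re}}$ is finite for all $a\in A$; (4) the Weyl groupoid $\mathcal W(\mathcal C)$ is finite (has finitely many morphisms).
   Context: Let $I$ be a nonempty finite set and $\{\alpha_i\mid i\in I\}$ the standard basis of $\mathbb Z^I$; $\mathbb N_0=\{0,1,2,\dots\}$. A generalized Cartan matrix is $C=(c_{ij})_{i,j\in I}\in\mathbb Z^{I\times I}$ with $c_{ii}=2$, $c_{jk}\le0$ for $j\ne k$, and $c_{ij}=0\Rightarrow c_{ji}=0$. A Cartan scheme $\mathcal C=\mathcal C(I,A,(\rho_i)_{i\in I},(C^a)_{a\in A})$ consists of a nonempty set $A$, maps $\rho_i:A\to A$ and generalized Cartan matrices $C^a=(c^a_{jk})_{j,k\in I}$ such that (C1) $\rho_i^2=\mathrm{id}$ and (C2) $c^a_{ij}=c^{\rho_i(a)}_{ij}$ for all $a\in A$, $i,j\in I$. It is connected if the group generated by the $\rho_i$ acts transitively on $A$. For $i\in I$, $a\in A$ let $\sigma_i^a\in\mathrm{Aut}(\mathbb Z^I)$, $\sigma_i^a(\alpha_j)=\alpha_j-c^a_{ij}\alpha_i$.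 The Weyl groupoid $\mathcal W(\mathcal C)$ has object set $A$; $\mathrm{Hom}(a,b)$ consists of the triples $(b,f,a)$ with $f=\sigma_{i_n}^{a_{n-1}}\cdots\sigma_{i_1}^{a_0}$, where $n\ge0$, $i_1,\dots,i_n\in I$, $a_0=a$, $a_k=\rho_{i_k}(a_{k-1})$, $a_n=b$ (one writes $\omega(v)=f(v)$ for $\omega=(b,f,a)$); composition is multiplication in $\mathrm{Aut}(\mathbb Z^I)$. A root system of type $\mathcal C$ is a family $\mathcal R=\mathcal R(\mathcal C,(R^a)_{a\in A})$ of subsets $R^a\subset\mathbb Z^I$ such that, writing $R^a_+=R^a\cap\mathbb N_0^I$ and $m^a_{i,j}=|R^a\cap(\mathbb N_0\alpha_i+\mathbb N_0\alpha_j)|$, for all $a\in A$, $i,j\in I$: (R1) $R^a=R^a_+\cup(-R^a_+)$; (R2) $R^a\cap\mathbb Z\alpha_i=\{\alpha_i,-\alpha_i\}$; (R3) $\sigma_i^a(R^a)=R^{\rho_i(a)}$; (R4) if $i\neq j$ and $m^a_{i,j}$ is finite then $(\rho_i\rho_j)^{m^a_{i,j}}(a)=a$. *)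

theory Defs
  imports Main
begin

text \<open>Elements of Z^I are represented as functions 'i => int vanishing outside I.\<close>

definition ZI :: "'i set \<Rightarrow> ('i \<Rightarrow> int) set" where
  "ZI I = {v. \<forall>k. k \<notin> I \<longrightarrow> v k = 0}"

definition alpha :: "'i \<Rightarrow> ('i \<Rightarrow> int)" where
  "alpha i = (\<lambda>j. if j = i then 1 else 0)"

definition gen_cartan_matrix :: "'i set \<Rightarrow> ('i \<Rightarrow> 'i \<Rightarrow> int) \<Rightarrow> bool" where
  "gen_cartan_matrix I c \<longleftrightarrow>
     (\<forall>i\<in>I. c i i = 2) \<and>
     (\<forall>j\<in>I. \<forall>k\<in>I. j \<noteq> k \<longrightarrow> c j k \<le> 0) \<and>
     (\<forall>i\<in>I. \<forall>j\<in>I. c i j = 0 \<longrightarrow> c j i = 0)"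

definition cartan_scheme ::
  "'i set \<Rightarrow> 'a set \<Rightarrow> ('i \<Rightarrow> 'a \<Rightarrow> 'a) \<Rightarrow> ('a \<Rightarrow> 'i \<Rightarrow> 'i \<Rightarrow> int) \<Rightarrow> bool" where
  "cartan_scheme I A rho C \<longleftrightarrow>
     finite I \<and> I \<noteq> {} \<and> A \<noteq> {} \<and>
     (\<forall>i\<in>I. \<forall>a\<in>A. rho i a \<in> A) \<and>
     (\<forall>a\<in>A. gen_cartan_matrix I (C a)) \<and>
     (\<forall>i\<in>I. \<forall>a\<in>A. rho i (rho i a) = a) \<and>
     (\<forall>a\<in>A. \<forall>i\<in>I. \<forall>j\<in>I. C a i j = C (rho i a) i j)"

definition connected_cs :: "'i set \<Rightarrow> 'a set \<Rightarrow> ('i \<Rightarrow> 'a \<Rightarrow> 'a) \<Rightarrow> bool" where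
  "connected_cs I A rho \<longleftrightarrow>
     (\<forall>a\<in>A. \<forall>b\<in>A. (a, b) \<in> {(x, rho i x) | x i. x \<in> A \<and> i \<in> I}\<^sup>*)"

text \<open>sigma_i^a (alpha_j) = alpha_j - c^a_ij alpha_i, extended linearly.\<close>
definition sigma :: "'i set \<Rightarrow> ('a \<Rightarrow> 'i \<Rightarrow> 'i \<Rightarrow> int) \<Rightarrow> 'i \<Rightarrow> 'a \<Rightarrow> ('i \<Rightarrow> int) \<Rightarrow> ('i \<Rightarrow> int)" where
  "sigma I C i a v = (\<lambda>k. if k = i then v i - (\<Sum>j\<in>I. C a i j * v j) else v k)"

text \<open>Morphisms of the Weyl groupoid: triples (b, f, a) with f a product of sigma's
  along a path from a to b.\<close>
inductive_set weyl_morphisms ::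
  "'i set \<Rightarrow> 'a set \<Rightarrow> ('i \<Rightarrow> 'a \<Rightarrow> 'a) \<Rightarrow> ('a \<Rightarrow> 'i \<Rightarrow> 'i \<Rightarrow> int)
     \<Rightarrow> ('a \<times> (('i \<Rightarrow> int) \<Rightarrow> ('i \<Rightarrow> int)) \<times> 'a) set"
  for I A rho C where
  idm: "a \<in> A \<Longrightarrow> (a, id, a) \<in> weyl_morphisms I A rho C"
| step: "(b, f, a) \<in> weyl_morphisms I A rho C \<Longrightarrow> i \<in> I \<Longrightarrow>
          (rho i b, sigma I C i b \<circ> f, a) \<in> weyl_morphisms I A rho C"

definition Hom ::
  "'i set \<Rightarrow> 'a set \<Rightarrow> ('i \<Rightarrow> 'a \<Rightarrow> 'a) \<Rightarrow> ('a \<Rightarrow> 'i \<Rightarrow> 'i \<Rightarrow> int) \<Rightarrow> 'a \<Rightarrow> 'a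
     \<Rightarrow> ('a \<times> (('i \<Rightarrow> int) \<Rightarrow> ('i \<Rightarrow> int)) \<times> 'a) set" where
  "Hom I A rho C a b = {(b', f, a'). (b', f, a') \<in> weyl_morphisms I A rho C \<and> a' = a \<and> b' = b}"

definition pos_roots :: "('i \<Rightarrow> int) set \<Rightarrow> ('i \<Rightarrow> int) set" where
  "pos_roots R = {v \<in> R. \<forall>k. 0 \<le> v k}"

definition m_ij :: "('i \<Rightarrow> int) set \<Rightarrow> 'i \<Rightarrow> 'i \<Rightarrow> ('i \<Rightarrow> int) set" where
  "m_ij R i j = R \<inter> {(\<lambda>k. x * alpha i k + y * alpha j k) | x y. x \<ge> 0 \<and> y \<ge> 0}"

definition root_system ::
  "'i set \<Rightarrow> 'a set \<Rightarrow> ('i \<Rightarrow> 'a \<Rightarrow> 'a) \<Rightarrow> ('a \<Rightarrow> 'i \<Rightarrow> 'i \<Rightarrow> int)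
     \<Rightarrow> ('a \<Rightarrow> ('i \<Rightarrow> int) set) \<Rightarrow> bool" where
  "root_system I A rho C R \<longleftrightarrow>
     cartan_scheme I A rho C \<and>
     (\<forall>a\<in>A. R a \<subseteq> ZI I) \<and>
     (\<forall>a\<in>A. R a = pos_roots (R a) \<union> uminus ` pos_roots (R a)) \<and>
     (\<forall>a\<in>A. \<forall>i\<in>I. R a \<inter> {(\<lambda>k. z * alpha i k) | z. True} = {alpha i, - alpha i}) \<and>
     (\<forall>a\<in>A. \<forall>i\<in>I. sigma I C i a ` R a = R (rho i a)) \<and>
     (\<forall>a\<in>A. \<forall>i\<in>I. \<forall>j\<in>I. i \<noteq> j \<longrightarrow> finite (m_ij (R a) i j) \<longrightarrow>
        ((rho i \<circ> rho j) ^^ card (m_ij (R a) i j)) a = a)"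

definition real_roots ::
  "'i set \<Rightarrow> 'a set \<Rightarrow> ('i \<Rightarrow> 'a \<Rightarrow> 'a) \<Rightarrow> ('a \<Rightarrow> 'i \<Rightarrow> 'i \<Rightarrow> int) \<Rightarrow> 'a
     \<Rightarrow> ('i \<Rightarrow> int) set" where
  "real_roots I A rho C a =
     {f (alpha i) | f b i. b \<in> A \<and> (a, f, b) \<in> Hom I A rho C b a \<and> i \<in> I}"

end

theory Submission
  imports Defs "HOL-Library.FuncSet" "HOL-Library.Function_Algebras"
begin

text \<open>Along a word the morphism \<open>\<sigma>\<^sub>i\<^sub>n \<circ> \<dots> \<circ> \<sigma>\<^sub>i\<^sub>1\<close> maps \<open>R\<^sup>a\<close> bijectively onto \<open>R\<^sup>b\<close>, and
  real roots are roots; with connectedness this gives (1) \<open>\<Leftrightarrow>\<close> (2) \<open>\<Rightarrow>\<close> (3).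

  (3) \<open>\<Rightarrow>\<close> (4): a morphism into \<open>a\<close> is linear, hence determined by the images of the simple
  roots, which are real roots at \<open>a\<close>; so there are finitely many maps into \<open>a\<close>. The source is
  determined by the target and the map: a loop with identity map has no inversions (positive roots
  sent to negative ones), and a morphism without inversions is an identity. This last fact is
  the exchange property of Heckenberger and Yamane -- a reduced word that stays reduced after
  appending \<open>k\<close> does not invert \<open>\<alpha>\<^sub>k\<close> -- proved by induction on the length, reducing to rank
  two, where (R4) yields the braid relations.

  (4) \<open>\<Rightarrow>\<close> (2): a word from \<open>a\<close> with the maximal number of inversions inverts every simple root;
  then every positive root at its target is minus the image of one of its finitely many
  inversions.\<close>

lemma nonneg_int_combination_eq_1:
  fixes a b p q :: int
  assumes "p \<ge> 0" "q \<ge> 0" "a \<ge> 1" "b \<ge> 1" "p * a + q * b = 1"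
  shows "(p = 1 \<and> q = 0) \<or> (p = 0 \<and> q = 1)"
proof -
  have "p \<le> p * a" "q \<le> q * b"
    using assms mult_le_cancel_left1[of p a] mult_le_cancel_left1[of q b] by auto
  with assms show ?thesis by (smt (verit) mult_eq_0_iff)
qed

definition int_linear :: "(('i \<Rightarrow> int) \<Rightarrow> ('i \<Rightarrow> int)) \<Rightarrow> bool" where
  "int_linear f \<longleftrightarrow> (\<forall>p q u v. f (\<lambda>k. p * u k + q * v k) = (\<lambda>k. p * f u k + q * f v k))"

lemma int_linearD: "int_linear f \<Longrightarrow> f (\<lambda>k. p * u k + q * v k) = (\<lambda>k. p * f u k + q * f v k)"
  unfolding int_linear_def by blast

lemma int_linear_id: "int_linear id"
  unfolding int_linear_def by simp

lemma int_linear_comp: "int_linear f \<Longrightarrow> int_linear g \<Longrightarrow> int_linear (f \<circ> g)"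
  unfolding int_linear_def by simp

lemma int_linear_neg:
  assumes "int_linear f" shows "f (- u) = - f u"
proof -
  have "f (\<lambda>k. (-1) * u k + 0 * u k) = (\<lambda>k. (-1) * f u k + 0 * f u k)"
    by (rule int_linearD[OF assms])
  moreover have "(\<lambda>k. (-1) * u k + 0 * u k) = - u" "(\<lambda>k. (-1) * f u k + 0 * f u k) = - f u"
    by (simp_all add: fun_eq_iff)
  ultimately show ?thesis by simp
qed

lemma int_linear_zero:
  assumes "int_linear f" shows "f (\<lambda>k. 0) = (\<lambda>k. 0)"
  using int_linearD[OF assms, of 0 "\<lambda>k. 0" 0 "\<lambda>k. 0"] by simp

lemma int_linear_sum:
  assumes "int_linear f" "finite S"
  shows "f (\<lambda>k. \<Sum>l\<in>S. c l * g l k) = (\<lambda>k. \<Sum>l\<in>S. c l * f (g l) k)"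
  using assms(2)
proof (induction S rule: finite_induct)
  case empty
  show ?case using int_linear_zero[OF assms(1)] by simp
next
  case (insert a S)
  have "f (\<lambda>k. c a * g a k + 1 * (\<Sum>l\<in>S. c l * g l k))
      = (\<lambda>k. c a * f (g a) k + 1 * f (\<lambda>k. \<Sum>l\<in>S. c l * g l k) k)"
    by (rule int_linearD[OF assms(1)])
  with insert show ?case by simp
qed

lemma ZI_expansion:
  assumes "finite S" "v \<in> ZI S"
  shows "v = (\<lambda>k. \<Sum>l\<in>S. v l * alpha l k)"
proof (rule ext)
  fix k
  have "(\<Sum>l\<in>S. v l * alpha l k) = (\<Sum>l\<in>S. if l = k then v l else 0)"
    by (rule sum.cong) (auto simp: alpha_def)
  also have "\<dots> = v k" using assms by (auto simp: ZI_def)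
  finally show "v k = (\<Sum>l\<in>S. v l * alpha l k)" by simp
qed

lemma ZI_pair_expansion:
  assumes "j \<noteq> k" "v \<in> ZI {j, k}"
  shows "v = (\<lambda>l. v j * alpha j l + v k * alpha k l)"
  using ZI_expansion[OF _ assms(2)] assms(1) by simp

lemma alpha_in_ZI: "i \<in> S \<Longrightarrow> alpha i \<in> ZI S"
  by (simp add: ZI_def alpha_def)

lemma int_linear_sigma: "int_linear (sigma I C i a)"
  unfolding int_linear_def sigma_def
  by (auto simp: fun_eq_iff sum.distrib sum_distrib_left algebra_simps)

lemma sigma_other: "k \<noteq> i \<Longrightarrow> sigma I C i a v k = v k"
  unfolding sigma_def by simp

lemma sigma_at: "sigma I C i a v i = v i - (\<Sum>j\<in>I. C a i j * v j)"
  unfolding sigma_def by simp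

lemma sigma_fixes_outside: "i \<in> I \<Longrightarrow> (\<And>k. k \<in> I \<Longrightarrow> v k = 0) \<Longrightarrow> sigma I C i a v = v"
  unfolding sigma_def by (rule ext) simp

text \<open>Words are read from right to left: the head of the list is the reflection applied last,
  so the word \<open>[i\<^sub>n, \<dots>, i\<^sub>1]\<close> at \<open>a\<close> gives the morphism
  \<open>\<sigma>\<^sub>i\<^sub>n\<^sup>a\<^sup>n\<^sup>-\<^sup>1 \<circ> \<dots> \<circ> \<sigma>\<^sub>i\<^sub>1\<^sup>a\<close> from \<open>a\<close> to \<open>word_end rho a [i\<^sub>n, \<dots>, i\<^sub>1]\<close>.\<close>

primrec word_end :: "('i \<Rightarrow> 'a \<Rightarrow> 'a) \<Rightarrow> 'a \<Rightarrow> 'i list \<Rightarrow> 'a" where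
  "word_end rho a [] = a"
| "word_end rho a (i # w) = rho i (word_end rho a w)"

primrec word_map ::
  "'i set \<Rightarrow> ('i \<Rightarrow> 'a \<Rightarrow> 'a) \<Rightarrow> ('a \<Rightarrow> 'i \<Rightarrow> 'i \<Rightarrow> int) \<Rightarrow> 'a \<Rightarrow> 'i list
     \<Rightarrow> ('i \<Rightarrow> int) \<Rightarrow> ('i \<Rightarrow> int)" where
  "word_map I rho C a [] = id"
| "word_map I rho C a (i # w) = sigma I C i (word_end rho a w) \<circ> word_map I rho C a w"

lemma word_end_append: "word_end rho a (u @ w) = word_end rho (word_end rho a w) u"
  by (induction u) auto

lemma word_map_append:
  "word_map I rho C a (u @ w) = word_map I rho C (word_end rho a w) u \<circ> word_map I rho C a w"
  by (induction u) (auto simp: word_end_append)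

lemma int_linear_word_map: "int_linear (word_map I rho C a w)"
proof (induction w)
  case Nil
  show ?case using int_linear_id by (simp add: id_def)
next
  case (Cons i w)
  show ?case using int_linear_comp[OF int_linear_sigma Cons.IH] by (simp add: comp_def)
qed

lemma word_map_other: "l \<notin> set w \<Longrightarrow> word_map I rho C a w v l = v l"
  by (induction w) (auto simp: sigma_other)

lemma word_map_ZI:
  assumes "set w \<subseteq> S" "v \<in> ZI S"
  shows "word_map I rho C a w v \<in> ZI S"
proof -
  have "word_map I rho C a w v k = 0" if "k \<notin> S" for k
  proof -
    have "k \<notin> set w" using that assms(1) by blast
    then show ?thesis using that assms(2) by (simp add: ZI_def word_map_other)
  qed
  then show ?thesis by (simp add: ZI_def)
qed

lemma word_map_fixes_outside:
  "set w \<subseteq> I \<Longrightarrow> (\<And>k. k \<in> I \<Longrightarrow> v k = 0) \<Longrightarrow> word_map I rho C a w v = v"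
  by (induction w) (auto simp: sigma_fixes_outside)

text \<open>A word map is the identity off \<open>\<int>\<^sup>I\<close> and linear, so it is determined by the images of
  the simple roots.\<close>

lemma word_map_eqI:
  fixes I :: "'i set"
  assumes "finite I" "set w \<subseteq> I" "set w' \<subseteq> I"
    and "\<And>l. l \<in> I \<Longrightarrow> word_map I rho C a w (alpha l) = word_map I rho C a' w' (alpha l)"
  shows "word_map I rho C a w = word_map I rho C a' w'"
proof
  fix v :: "'i \<Rightarrow> int"
  define v\<^sub>I where "v\<^sub>I = (\<lambda>k. if k \<in> I then v k else 0)"
  define v\<^sub>O where "v\<^sub>O = (\<lambda>k. if k \<in> I then 0 else v k)"
  have v\<^sub>I_expansion: "v\<^sub>I = (\<lambda>k. \<Sum>l\<in>I. v\<^sub>I l * alpha l k)"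
    by (rule ZI_expansion[OF assms(1)]) (simp add: ZI_def v\<^sub>I_def)
  have expand: "word_map I rho C b u v
      = (\<lambda>k. (\<Sum>l\<in>I. v\<^sub>I l * word_map I rho C b u (alpha l) k) + v\<^sub>O k)"
    if "set u \<subseteq> I" for b u
  proof -
    have v: "v = (\<lambda>k. 1 * v\<^sub>I k + 1 * v\<^sub>O k)" by (auto simp: v\<^sub>I_def v\<^sub>O_def)
    have "word_map I rho C b u v\<^sub>I = (\<lambda>k. \<Sum>l\<in>I. v\<^sub>I l * word_map I rho C b u (alpha l) k)"
      using int_linear_sum[OF int_linear_word_map assms(1), of I rho C b u v\<^sub>I alpha]
      by (simp only: v\<^sub>I_expansion[symmetric])
    moreover have "word_map I rho C b u v\<^sub>O = v\<^sub>O"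
      using that by (auto intro: word_map_fixes_outside simp: v\<^sub>O_def)
    ultimately show ?thesis
      by (subst v, subst int_linearD[OF int_linear_word_map]) simp
  qed
  have "word_map I rho C a w v = (\<lambda>k. (\<Sum>l\<in>I. v\<^sub>I l * word_map I rho C a w (alpha l) k) + v\<^sub>O k)"
    by (rule expand[OF assms(2)])
  also have "\<dots> = (\<lambda>k. (\<Sum>l\<in>I. v\<^sub>I l * word_map I rho C a' w' (alpha l) k) + v\<^sub>O k)"
    using assms(4) by simp
  also have "\<dots> = word_map I rho C a' w' v"
    by (rule expand[OF assms(3), symmetric])
  finally show "word_map I rho C a w v = word_map I rho C a' w' v" .
qed

text \<open>\<open>alt_word j k t\<close> is the alternating word \<open>\<dots> k j k j\<close> of length \<open>t\<close>; its last letter, the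
  first reflection applied, is \<open>j\<close>.\<close>

primrec alt_word :: "'i \<Rightarrow> 'i \<Rightarrow> nat \<Rightarrow> 'i list" where
  "alt_word j k 0 = []"
| "alt_word j k (Suc t) = (if even t then j else k) # alt_word j k t"

lemma set_alt_word: "set (alt_word j k t) \<subseteq> {j, k}"
  by (induction t) auto

lemma length_alt_word [simp]: "length (alt_word j k t) = t"
  by (induction t) auto

lemma alt_word_Suc_snoc: "alt_word j k (Suc t) = alt_word k j t @ [j]"
  by (induction t) auto

lemma alt_word_add:
  "alt_word j k (s + t) = (if even t then alt_word j k s else alt_word k j s) @ alt_word j k t"
  by (induction s) auto

lemma rev_alt_word: "rev (alt_word j k t) = (if even t then alt_word k j t else alt_word j k t)"
proof (induction t arbitrary: j k)
  case (Suc t)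
  have "rev (alt_word j k (Suc t)) = j # rev (alt_word k j t)"
    by (simp only: alt_word_Suc_snoc rev_append) simp
  with Suc show ?case by (cases "even t") simp_all
qed simp

lemma alt_word_double:
  "alt_word j k (2 * t) = (if even t then alt_word j k t else alt_word k j t) @ alt_word j k t"
  using alt_word_add[of j k t t] by (simp add: mult_2)

definition stutter_free :: "'i list \<Rightarrow> bool" where
  "stutter_free u \<longleftrightarrow> (\<forall>p q l. u \<noteq> p @ [l, l] @ q)"

lemma stutter_free_Cons: "stutter_free (l # u) \<Longrightarrow> stutter_free u"
  unfolding stutter_free_def by (metis append_Cons)

lemma stutter_free_two_letters_alt_word:
  assumes "j \<noteq> k" "set u \<subseteq> {j, k}" "stutter_free u" "u = [] \<or> last u = j"
  shows "u = alt_word j k (length u)"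
  using assms(2-)
proof (induction u)
  case (Cons l u)
  show ?case
  proof (cases "u = []")
    case False
    then have "u = alt_word j k (length u)"
      using Cons stutter_free_Cons[of l u] by simp
    moreover obtain n where n: "length u = Suc n" using False by (cases u) auto
    ultimately have u: "u = (if even n then j else k) # alt_word j k n" by simp
    have "l \<noteq> (if even n then j else k)"
    proof
      assume "l = (if even n then j else k)"
      then have "l # u = [] @ [l, l] @ alt_word j k n" using u by simp
      then show False using Cons.prems(2) unfolding stutter_free_def by blast
    qed
    with Cons.prems(1) assms(1) have "l = (if even (Suc n) then j else k)" by auto
    with u n show ?thesis by simp
  qed (use Cons.prems in simp)
qed simp

lemma word_end_alt_word_even: "word_end rho a (alt_word j k (2 * n)) = ((rho k \<circ> rho j) ^^ n) a"
proof (induction n)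
  case (Suc n)
  have "2 * Suc n = Suc (Suc (2 * n))" by simp
  then have "alt_word j k (2 * Suc n) = k # j # alt_word j k (2 * n)" by simp
  with Suc show ?case by simp
qed simp

locale cartan =
  fixes I :: "'i set" and A :: "'a set" and rho :: "'i \<Rightarrow> 'a \<Rightarrow> 'a"
    and C :: "'a \<Rightarrow> 'i \<Rightarrow> 'i \<Rightarrow> int"
  assumes cartan_scheme: "cartan_scheme I A rho C"
begin

abbreviation tgt :: "'a \<Rightarrow> 'i list \<Rightarrow> 'a" where "tgt \<equiv> word_end rho"
abbreviation wmap :: "'a \<Rightarrow> 'i list \<Rightarrow> ('i \<Rightarrow> int) \<Rightarrow> ('i \<Rightarrow> int)" where
  "wmap \<equiv> word_map I rho C"

lemma finite_I: "finite I"
  using cartan_scheme unfolding cartan_scheme_def by blast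

lemma A_nonempty: "A \<noteq> {}"
  using cartan_scheme unfolding cartan_scheme_def by blast

lemma I_nonempty: "I \<noteq> {}"
  using cartan_scheme unfolding cartan_scheme_def by blast

lemma rho_in_A: "i \<in> I \<Longrightarrow> a \<in> A \<Longrightarrow> rho i a \<in> A"
  using cartan_scheme unfolding cartan_scheme_def by blast

lemma rho_rho: "i \<in> I \<Longrightarrow> a \<in> A \<Longrightarrow> rho i (rho i a) = a"
  using cartan_scheme unfolding cartan_scheme_def by blast

lemma C_rho: "a \<in> A \<Longrightarrow> i \<in> I \<Longrightarrow> j \<in> I \<Longrightarrow> C (rho i a) i j = C a i j"
  using cartan_scheme unfolding cartan_scheme_def by metis

lemma C_diag: "a \<in> A \<Longrightarrow> i \<in> I \<Longrightarrow> C a i i = 2"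
  using cartan_scheme unfolding cartan_scheme_def gen_cartan_matrix_def by blast

lemma sum_split_diag: "i \<in> I \<Longrightarrow> (\<Sum>j\<in>I. g j) = g i + (\<Sum>j\<in>I - {i}. g j)"
  using finite_I by (simp add: sum.remove)

lemma sigma_sigma:
  assumes i: "i \<in> I" and a: "a \<in> A"
  shows "sigma I C i (rho i a) (sigma I C i a v) = v"
proof
  fix k
  show "sigma I C i (rho i a) (sigma I C i a v) k = v k"
  proof (cases "k = i")
    case True
    define S where "S = (\<Sum>j\<in>I - {i}. C a i j * v j)"
    have "(\<Sum>j\<in>I - {i}. C (rho i a) i j * sigma I C i a v j) = S"
      unfolding S_def by (rule sum.cong) (auto simp: sigma_other C_rho[OF a i])
    then have "(\<Sum>j\<in>I. C (rho i a) i j * sigma I C i a v j) = 2 * sigma I C i a v i + S"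
      using sum_split_diag[OF i, of "\<lambda>j. C (rho i a) i j * sigma I C i a v j"]
        C_rho[OF a i i] C_diag[OF a i] by simp
    moreover have "sigma I C i a v i = - v i - S"
      using sum_split_diag[OF i, of "\<lambda>j. C a i j * v j"] C_diag[OF a i] by (simp add: sigma_at S_def)
    ultimately show ?thesis using True by (simp add: sigma_at)
  qed (simp add: sigma_other)
qed

lemma sigma_alpha:
  assumes i: "i \<in> I" and a: "a \<in> A"
  shows "sigma I C i a (alpha i) = - alpha i"
proof
  fix k
  have "(\<Sum>j\<in>I. C a i j * alpha i j) = C a i i"
    using i finite_I by (simp add: alpha_def if_distrib cong: if_cong)
  then show "sigma I C i a (alpha i) k = (- alpha i) k"
    using C_diag[OF a i] by (cases "k = i") (auto simp: sigma_at sigma_other alpha_def)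
qed

lemma tgt_in_A: "a \<in> A \<Longrightarrow> set w \<subseteq> I \<Longrightarrow> tgt a w \<in> A"
  by (induction w) (auto simp: rho_in_A)

lemma tgt_rev: "a \<in> A \<Longrightarrow> set w \<subseteq> I \<Longrightarrow> tgt (tgt a w) (rev w) = a"
  by (induction w) (auto simp: word_end_append rho_rho tgt_in_A)

lemma wmap_rev:
  "a \<in> A \<Longrightarrow> set w \<subseteq> I \<Longrightarrow> wmap (tgt a w) (rev w) (wmap a w v) = v"
  by (induction w arbitrary: v) (auto simp: word_map_append word_end_append rho_rho sigma_sigma tgt_in_A)

lemma inj_wmap: "a \<in> A \<Longrightarrow> set w \<subseteq> I \<Longrightarrow> inj (wmap a w)"
  by (metis injI wmap_rev)

lemma tgt_snoc: "k \<in> I \<Longrightarrow> a \<in> A \<Longrightarrow> tgt (rho k a) (w @ [k]) = tgt a w"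
  by (simp add: word_end_append rho_rho)

lemma wmap_snoc:
  "k \<in> I \<Longrightarrow> a \<in> A \<Longrightarrow> wmap (rho k a) (w @ [k]) v = wmap a w (sigma I C k (rho k a) v)"
  by (simp add: word_map_append word_end_append rho_rho)

lemma weyl_morphism_iff_word:
  "(b, f, a) \<in> weyl_morphisms I A rho C \<longleftrightarrow> a \<in> A \<and> (\<exists>w. set w \<subseteq> I \<and> b = tgt a w \<and> f = wmap a w)"
proof
  assume "(b, f, a) \<in> weyl_morphisms I A rho C"
  then show "a \<in> A \<and> (\<exists>w. set w \<subseteq> I \<and> b = tgt a w \<and> f = wmap a w)"
  proof (induction rule: weyl_morphisms.induct)
    case (idm a)
    then show ?case by (auto intro!: exI[of _ "[]"])
  next
    case (step b f a i)
    then obtain w where "set w \<subseteq> I" "b = tgt a w" "f = wmap a w" by auto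
    with step show ?case by (auto intro!: exI[of _ "i # w"])
  qed
next
  have "(tgt a w, wmap a w, a) \<in> weyl_morphisms I A rho C" if "a \<in> A" "set w \<subseteq> I" for w
    using that by (induction w) (auto intro: weyl_morphisms.intros)
  then show "a \<in> A \<and> (\<exists>w. set w \<subseteq> I \<and> b = tgt a w \<and> f = wmap a w)
      \<Longrightarrow> (b, f, a) \<in> weyl_morphisms I A rho C" by blast
qed

definition word_equiv :: "'a \<Rightarrow> 'i list \<Rightarrow> 'i list \<Rightarrow> bool" where
  "word_equiv a w w' \<longleftrightarrow> tgt a w = tgt a w' \<and> wmap a w = wmap a w'"

definition reduced :: "'a \<Rightarrow> 'i list \<Rightarrow> bool" where
  "reduced a w \<longleftrightarrow> set w \<subseteq> I \<and> (\<forall>w'. set w' \<subseteq> I \<longrightarrow> word_equiv a w w' \<longrightarrow> length w \<le> length w')"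

lemma word_equiv_refl: "word_equiv a w w"
  by (simp add: word_equiv_def)

lemma word_equiv_sym: "word_equiv a w w' \<Longrightarrow> word_equiv a w' w"
  by (simp add: word_equiv_def)

lemma word_equiv_trans: "word_equiv a w w' \<Longrightarrow> word_equiv a w' w'' \<Longrightarrow> word_equiv a w w''"
  by (simp add: word_equiv_def)

lemma word_equiv_append_left: "word_equiv (tgt a u) v v' \<Longrightarrow> word_equiv a (v @ u) (v' @ u)"
  by (simp add: word_equiv_def word_end_append word_map_append)

lemma word_equiv_append_right: "word_equiv a u u' \<Longrightarrow> word_equiv a (v @ u) (v @ u')"
  by (simp add: word_equiv_def word_end_append word_map_append)

lemma word_equiv_cancel_square:
  assumes a: "a \<in> A" and q: "set q \<subseteq> I" and j: "j \<in> I"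
  shows "word_equiv a (p @ [j, j] @ q) (p @ q)"
proof -
  have b: "tgt a q \<in> A" using tgt_in_A[OF a q] .
  have "word_equiv (tgt a q) [j, j] []"
    using rho_rho[OF j b] sigma_sigma[OF j b] by (simp add: word_equiv_def fun_eq_iff)
  then have "word_equiv a ([j, j] @ q) ([] @ q)" by (rule word_equiv_append_left)
  then show ?thesis using word_equiv_append_right by fastforce
qed

lemma reduced_exists: "set w \<subseteq> I \<Longrightarrow> \<exists>w\<^sub>0. reduced a w\<^sub>0 \<and> word_equiv a w w\<^sub>0"
proof -
  assume "set w \<subseteq> I"
  then obtain w\<^sub>0 where w\<^sub>0: "set w\<^sub>0 \<subseteq> I \<and> word_equiv a w w\<^sub>0"
    and least: "\<And>w\<^sub>1. set w\<^sub>1 \<subseteq> I \<and> word_equiv a w w\<^sub>1 \<Longrightarrow> length w\<^sub>0 \<le> length w\<^sub>1"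
    using ex_has_least_nat[of "\<lambda>w\<^sub>1. set w\<^sub>1 \<subseteq> I \<and> word_equiv a w w\<^sub>1" w length] word_equiv_refl
    by blast
  then have "reduced a w\<^sub>0"
    unfolding reduced_def by (meson word_equiv_trans)
  with w\<^sub>0 show ?thesis by blast
qed

lemma reduced_suffix: "reduced a (v @ u) \<Longrightarrow> reduced a u"
  unfolding reduced_def
  by (metis add_le_cancel_left le_sup_iff length_append set_append word_equiv_append_right)

lemma reduced_prefix: "reduced a (v @ u) \<Longrightarrow> reduced (tgt a u) v"
  unfolding reduced_def
  by (metis add_le_cancel_right le_sup_iff length_append set_append word_equiv_append_left)

lemma reduced_equiv:
  "reduced a w \<Longrightarrow> word_equiv a w w' \<Longrightarrow> set w' \<subseteq> I \<Longrightarrow> length w' = length w \<Longrightarrow> reduced a w'"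
  unfolding reduced_def by (metis word_equiv_sym word_equiv_trans)

lemma reduced_no_square:
  assumes a: "a \<in> A" and r: "reduced a (p @ [j, j] @ q)"
  shows False
proof -
  have I: "set (p @ [j, j] @ q) \<subseteq> I" using r unfolding reduced_def by blast
  then have "word_equiv a (p @ [j, j] @ q) (p @ q)" by (intro word_equiv_cancel_square[OF a]) auto
  moreover have "set (p @ q) \<subseteq> I" using I by auto
  ultimately have "length (p @ [j, j] @ q) \<le> length (p @ q)" using r unfolding reduced_def by blast
  then show False by simp
qed

lemma reduced_stutter_free: "a \<in> A \<Longrightarrow> reduced a u \<Longrightarrow> stutter_free u"
  unfolding stutter_free_def using reduced_no_square by blast

lemma reduced_snoc_last:
  assumes a: "a \<in> A" and k: "k \<in> I" and r: "reduced (rho k a) (u @ [k])"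
  shows "u = [] \<or> last u \<noteq> k"
proof (rule ccontr)
  assume "\<not> ?thesis"
  then obtain u' where "u = u' @ [k]" by (metis append_butlast_last_id)
  then show False using reduced_no_square[OF rho_in_A[OF k a], of u' k "[]"] r by simp
qed

lemma reduced_snoc_of_equiv:
  assumes a: "a \<in> A" and k: "k \<in> I" and r: "reduced (rho k a) (w @ [k])"
    and e: "word_equiv a w (v @ u)" and v: "set v \<subseteq> I" and u: "set u \<subseteq> I"
    and len: "length (v @ u) = length w"
  shows "reduced (rho k a) (u @ [k])"
proof -
  have "word_equiv (rho k a) (w @ [k]) ((v @ u) @ [k])"
    using e rho_rho[OF k a] by (intro word_equiv_append_left) simp
  then have "reduced (rho k a) (v @ (u @ [k]))"
    using reduced_equiv[OF r] v u k len by simp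
  then show ?thesis by (rule reduced_suffix)
qed

end

locale root_sys = cartan I A rho C
  for I :: "'i set" and A :: "'a set" and rho :: "'i \<Rightarrow> 'a \<Rightarrow> 'a"
    and C :: "'a \<Rightarrow> 'i \<Rightarrow> 'i \<Rightarrow> int" +
  fixes R :: "'a \<Rightarrow> ('i \<Rightarrow> int) set"
  assumes R_in_ZI: "a \<in> A \<Longrightarrow> R a \<subseteq> ZI I"
    and R_pos_neg: "a \<in> A \<Longrightarrow> R a = pos_roots (R a) \<union> uminus ` pos_roots (R a)"
    and R_multiples_alpha:
      "a \<in> A \<Longrightarrow> i \<in> I \<Longrightarrow> R a \<inter> {(\<lambda>k. z * alpha i k) | z. True} = {alpha i, - alpha i}"
    and sigma_image_R: "a \<in> A \<Longrightarrow> i \<in> I \<Longrightarrow> sigma I C i a ` R a = R (rho i a)"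
    and rho_rho_power_m_ij: "a \<in> A \<Longrightarrow> i \<in> I \<Longrightarrow> j \<in> I \<Longrightarrow> i \<noteq> j
      \<Longrightarrow> finite (m_ij (R a) i j) \<Longrightarrow> ((rho i \<circ> rho j) ^^ card (m_ij (R a) i j)) a = a"

lemma root_sys_if_root_system:
  assumes "root_system I A rho C R"
  shows "root_sys I A rho C R"
proof -
  from assms obtain cs: "cartan_scheme I A rho C" and R0: "\<forall>a\<in>A. R a \<subseteq> ZI I"
    and R1: "\<forall>a\<in>A. R a = pos_roots (R a) \<union> uminus ` pos_roots (R a)"
    and R2: "\<forall>a\<in>A. \<forall>i\<in>I. R a \<inter> {(\<lambda>k. z * alpha i k) | z. True} = {alpha i, - alpha i}"
    and R3: "\<forall>a\<in>A. \<forall>i\<in>I. sigma I C i a ` R a = R (rho i a)"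
    and R4: "\<forall>a\<in>A. \<forall>i\<in>I. \<forall>j\<in>I. i \<noteq> j \<longrightarrow> finite (m_ij (R a) i j) \<longrightarrow>
        ((rho i \<circ> rho j) ^^ card (m_ij (R a) i j)) a = a"
    unfolding root_system_def by (elim conjE)
  show ?thesis
    by unfold_locales
      (use cs in \<open>simp only: cartan_def\<close>, use R0 in blast, use R1 in blast, use R2 in blast,
        use R3 in blast, use R4 in blast)
qed

context root_sys
begin

abbreviation Rpos :: "'a \<Rightarrow> ('i \<Rightarrow> int) set" where "Rpos a \<equiv> pos_roots (R a)"

lemma pos_rootD: "v \<in> Rpos a \<Longrightarrow> v \<in> R a"
  by (simp add: pos_roots_def)

lemma pos_root_nonneg: "v \<in> Rpos a \<Longrightarrow> 0 \<le> v k"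
  by (simp add: pos_roots_def)

lemma pos_rootI: "v \<in> R a \<Longrightarrow> (\<And>k. 0 \<le> v k) \<Longrightarrow> v \<in> Rpos a"
  by (simp add: pos_roots_def)

lemma alpha_root: "a \<in> A \<Longrightarrow> i \<in> I \<Longrightarrow> alpha i \<in> R a"
  using R_multiples_alpha by blast

lemma alpha_pos_root: "a \<in> A \<Longrightarrow> i \<in> I \<Longrightarrow> alpha i \<in> Rpos a"
  by (rule pos_rootI[OF alpha_root]) (auto simp: alpha_def)

lemma zero_not_root:
  assumes a: "a \<in> A" shows "(\<lambda>k. 0) \<notin> R a"
proof
  obtain i where i: "i \<in> I" using I_nonempty by auto
  assume "(\<lambda>k. 0) \<in> R a"
  then have "(\<lambda>k. 0) \<in> R a \<inter> {(\<lambda>k. z * alpha i k) | z. True}" by (auto intro: exI[of _ 0])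
  then have "(\<lambda>k. 0) \<in> {alpha i, - alpha i}" using R_multiples_alpha[OF a i] by blast
  then show False by (auto simp: fun_eq_iff alpha_def dest: spec[of _ i])
qed

lemma root_pos_or_neg: "a \<in> A \<Longrightarrow> v \<in> R a \<Longrightarrow> v \<in> Rpos a \<or> - v \<in> Rpos a"
  by (subst (asm) R_pos_neg) auto

lemma neg_root: "a \<in> A \<Longrightarrow> v \<in> R a \<Longrightarrow> - v \<in> R a"
  by (subst R_pos_neg, assumption, subst (asm) R_pos_neg) auto

lemma nonpos_not_pos_root:
  assumes a: "a \<in> A" and v: "v \<in> Rpos a" and nonpos: "\<And>k. v k \<le> 0"
  shows False
proof -
  have "v = (\<lambda>k. 0)" using nonpos pos_root_nonneg[OF v] by (intro ext) (meson order.antisym)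
  then show False using zero_not_root[OF a] pos_rootD[OF v] by simp
qed

lemma neg_not_pos_root: "a \<in> A \<Longrightarrow> v \<in> Rpos a \<Longrightarrow> - v \<notin> Rpos a"
  using nonpos_not_pos_root pos_root_nonneg by (metis neg_0_le_iff_le uminus_apply)

lemma pos_root_if_pos_coord:
  assumes "a \<in> A" "v \<in> R a" "v l > 0"
  shows "v \<in> Rpos a"
  using root_pos_or_neg[OF assms(1,2)] pos_root_nonneg[of "- v" a l] assms(3) by force

text \<open>A positive root other than \<open>\<alpha>\<^sub>i\<close> has a positive coordinate off \<open>i\<close> (by (R2)), and \<open>\<sigma>\<^sub>i\<close> does
  not change that coordinate.\<close>

lemma sigma_pos_root:
  assumes i: "i \<in> I" and a: "a \<in> A" and \<beta>: "\<beta> \<in> Rpos a" "\<beta> \<noteq> alpha i"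
  shows "sigma I C i a \<beta> \<in> Rpos (rho i a)"
proof -
  have "\<exists>k. k \<noteq> i \<and> \<beta> k > 0"
  proof (rule ccontr)
    assume "\<nexists>k. k \<noteq> i \<and> \<beta> k > 0"
    then have "\<beta> k = 0" if "k \<noteq> i" for k using that pos_root_nonneg[OF \<beta>(1), of k] by force
    then have "\<beta> = (\<lambda>k. \<beta> i * alpha i k)" by (auto simp: alpha_def)
    then have "\<beta> \<in> R a \<inter> {(\<lambda>k. z * alpha i k) | z. True}" using pos_rootD[OF \<beta>(1)] by blast
    then have "\<beta> = - alpha i" using R_multiples_alpha[OF a i] \<beta>(2) by blast
    then show False using pos_root_nonneg[OF \<beta>(1), of i] by (simp add: alpha_def)
  qed
  then obtain k where k: "k \<noteq> i" "\<beta> k > 0" by blast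
  have "sigma I C i a \<beta> \<in> R (rho i a)" using sigma_image_R[OF a i] pos_rootD[OF \<beta>(1)] by blast
  moreover have "sigma I C i a \<beta> k > 0" using k by (simp add: sigma_other)
  ultimately show ?thesis by (rule pos_root_if_pos_coord[OF rho_in_A[OF i a]])
qed

lemma sigma_pos_root_iff:
  assumes i: "i \<in> I" and a: "a \<in> A" and \<beta>: "\<beta> \<in> R a"
  shows "sigma I C i a \<beta> \<in> Rpos (rho i a) \<longleftrightarrow> (\<beta> \<in> Rpos a \<and> \<beta> \<noteq> alpha i) \<or> \<beta> = - alpha i"
proof
  have b: "rho i a \<in> A" using rho_in_A[OF i a] .
  assume pos: "sigma I C i a \<beta> \<in> Rpos (rho i a)"
  show "(\<beta> \<in> Rpos a \<and> \<beta> \<noteq> alpha i) \<or> \<beta> = - alpha i"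
  proof (rule ccontr)
    assume contra: "\<not> ?thesis"
    show False
    proof (cases "\<beta> = alpha i")
      case True
      then show False using pos sigma_alpha[OF i a] neg_not_pos_root[OF b alpha_pos_root[OF b i]] by simp
    next
      case False
      then have "- \<beta> \<in> Rpos a" "- \<beta> \<noteq> alpha i"
        using contra root_pos_or_neg[OF a \<beta>] by (metis minus_minus)+
      then have "sigma I C i a (- \<beta>) \<in> Rpos (rho i a)" by (rule sigma_pos_root[OF i a])
      then show False
        using neg_not_pos_root[OF b pos] by (simp add: int_linear_neg[OF int_linear_sigma])
    qed
  qed
next
  assume "(\<beta> \<in> Rpos a \<and> \<beta> \<noteq> alpha i) \<or> \<beta> = - alpha i"
  then show "sigma I C i a \<beta> \<in> Rpos (rho i a)"
    using sigma_pos_root[OF i a] sigma_alpha[OF i a] alpha_pos_root[OF rho_in_A[OF i a] i]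
    by (auto simp: int_linear_neg[OF int_linear_sigma])
qed

lemma wmap_image_R: "a \<in> A \<Longrightarrow> set w \<subseteq> I \<Longrightarrow> wmap a w ` R a = R (tgt a w)"
proof (induction w)
  case (Cons i w)
  have "wmap a (i # w) ` R a = sigma I C i (tgt a w) ` (wmap a w ` R a)"
    by (simp add: image_image)
  also have "\<dots> = sigma I C i (tgt a w) ` R (tgt a w)"
    using Cons by simp
  also have "\<dots> = R (tgt a (i # w))"
    using Cons.prems by (simp add: sigma_image_R tgt_in_A)
  finally show ?case .
qed simp

lemma wmap_root: "a \<in> A \<Longrightarrow> set w \<subseteq> I \<Longrightarrow> v \<in> R a \<Longrightarrow> wmap a w v \<in> R (tgt a w)"
  using wmap_image_R by blast

definition inversions :: "'a \<Rightarrow> 'i list \<Rightarrow> ('i \<Rightarrow> int) set" where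
  "inversions a w = {\<alpha> \<in> Rpos a. wmap a w \<alpha> \<notin> Rpos (tgt a w)}"

lemma simple_root_preimage:
  assumes a: "a \<in> A" and w: "set w \<subseteq> I" and i: "i \<in> I"
  obtains (pos) \<gamma> where "\<gamma> \<in> Rpos a" "wmap a w \<gamma> = alpha i"
    | (neg) \<gamma> where "\<gamma> \<in> Rpos a" "wmap a w \<gamma> = - alpha i"
proof -
  have "alpha i \<in> R (tgt a w)" using alpha_root[OF tgt_in_A[OF a w] i] .
  then obtain \<delta> where \<delta>: "\<delta> \<in> R a" "wmap a w \<delta> = alpha i"
    using wmap_image_R[OF a w] by (metis imageE)
  show thesis
  proof (cases "\<delta> \<in> Rpos a")
    case False
    then have "- \<delta> \<in> Rpos a" using root_pos_or_neg[OF a \<delta>(1)] by blast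
    moreover have "wmap a w (- \<delta>) = - alpha i" using \<delta>(2) by (simp add: int_linear_neg[OF int_linear_word_map])
    ultimately show thesis by (rule neg)
  qed (use \<delta> pos in blast)
qed

lemma wmap_pos_roots_not_opposite:
  assumes "a \<in> A" "set w \<subseteq> I" "\<alpha> \<in> Rpos a" "\<gamma> \<in> Rpos a"
  shows "wmap a w \<alpha> \<noteq> - wmap a w \<gamma>"
proof
  assume "wmap a w \<alpha> = - wmap a w \<gamma>"
  then have "wmap a w \<alpha> = wmap a w (- \<gamma>)" by (simp add: int_linear_neg[OF int_linear_word_map])
  then have "\<alpha> = - \<gamma>" using inj_wmap[OF assms(1,2)] by (meson injD)
  then show False using neg_not_pos_root[OF assms(1,4)] assms(3) by simp
qed

text \<open>Appending a letter \<open>i\<close> changes the inversion set by exactly the positive root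
  \<open>\<gamma>\<close> sent to \<open>\<plusminus>\<alpha>\<^sub>i\<close>, since \<open>\<sigma>\<^sub>i\<close> permutes the positive roots other than \<open>\<alpha>\<^sub>i\<close>.\<close>

lemma inversions_Cons_iff:
  assumes a: "a \<in> A" and w: "set w \<subseteq> I" and i: "i \<in> I" and \<alpha>: "\<alpha> \<in> Rpos a"
  shows "\<alpha> \<in> inversions a (i # w) \<longleftrightarrow>
    \<not> ((wmap a w \<alpha> \<in> Rpos (tgt a w) \<and> wmap a w \<alpha> \<noteq> alpha i) \<or> wmap a w \<alpha> = - alpha i)"
  using sigma_pos_root_iff[OF i tgt_in_A[OF a w] wmap_root[OF a w pos_rootD[OF \<alpha>]]] \<alpha>
  by (simp add: inversions_def)

lemma inversions_Cons_pos:
  assumes a: "a \<in> A" and w: "set w \<subseteq> I" and i: "i \<in> I"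
    and \<gamma>: "\<gamma> \<in> Rpos a" "wmap a w \<gamma> = alpha i"
  shows "inversions a (i # w) = insert \<gamma> (inversions a w)" "\<gamma> \<notin> inversions a w"
proof -
  have "\<alpha> \<in> inversions a (i # w) \<longleftrightarrow> \<alpha> = \<gamma> \<or> \<alpha> \<in> inversions a w" if \<alpha>: "\<alpha> \<in> Rpos a" for \<alpha>
  proof -
    have "wmap a w \<alpha> \<noteq> - alpha i" using wmap_pos_roots_not_opposite[OF a w \<alpha> \<gamma>(1)] \<gamma>(2) by simp
    moreover have "wmap a w \<alpha> = alpha i \<longleftrightarrow> \<alpha> = \<gamma>" using inj_wmap[OF a w] \<gamma>(2) by (metis injD)
    ultimately show ?thesis
      using inversions_Cons_iff[OF a w i \<alpha>] \<alpha> \<gamma> by (auto simp: inversions_def)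
  qed
  then show "inversions a (i # w) = insert \<gamma> (inversions a w)"
    using \<gamma>(1) by (auto simp: inversions_def)
  show "\<gamma> \<notin> inversions a w"
    using \<gamma> alpha_pos_root[OF tgt_in_A[OF a w] i] by (simp add: inversions_def)
qed

lemma inversions_Cons_neg:
  assumes a: "a \<in> A" and w: "set w \<subseteq> I" and i: "i \<in> I"
    and \<gamma>: "\<gamma> \<in> Rpos a" "wmap a w \<gamma> = - alpha i"
  shows "inversions a (i # w) = inversions a w - {\<gamma>}" "\<gamma> \<in> inversions a w"
proof -
  have "\<alpha> \<in> inversions a (i # w) \<longleftrightarrow> \<alpha> \<noteq> \<gamma> \<and> \<alpha> \<in> inversions a w" if \<alpha>: "\<alpha> \<in> Rpos a" for \<alpha>
  proof -
    have "wmap a w \<alpha> \<noteq> alpha i" using wmap_pos_roots_not_opposite[OF a w \<alpha> \<gamma>(1)] \<gamma>(2) by simp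
    moreover have "wmap a w \<alpha> = - alpha i \<longleftrightarrow> \<alpha> = \<gamma>" using inj_wmap[OF a w] \<gamma>(2) by (metis injD)
    ultimately show ?thesis
      using inversions_Cons_iff[OF a w i \<alpha>] \<alpha> \<gamma> by (auto simp: inversions_def)
  qed
  then show "inversions a (i # w) = inversions a w - {\<gamma>}"
    by (auto simp: inversions_def)
  show "\<gamma> \<in> inversions a w"
    using \<gamma> neg_not_pos_root[OF tgt_in_A[OF a w] alpha_pos_root[OF tgt_in_A[OF a w] i]]
    by (simp add: inversions_def)
qed

lemma inversions_finite_card_parity:
  "a \<in> A \<Longrightarrow> set w \<subseteq> I \<Longrightarrow>
    finite (inversions a w) \<and> card (inversions a w) \<le> length w \<and> even (card (inversions a w) + length w)"
proof (induction w)
  case Nil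
  then show ?case by (simp add: inversions_def)
next
  case (Cons i w)
  then have a: "a \<in> A" and w: "set w \<subseteq> I" and i: "i \<in> I" by auto
  from a w i show ?case
  proof (cases rule: simple_root_preimage)
    case (pos \<gamma>)
    with Cons show ?thesis using inversions_Cons_pos[OF a w i pos] by simp
  next
    case (neg \<gamma>)
    note inv = inversions_Cons_neg[OF a w i neg]
    have "finite (inversions a w)" using Cons.IH a w by blast
    with inv(2) have "card (inversions a w) \<ge> 1"
      by (metis One_nat_def Suc_leI card_gt_0_iff empty_iff)
    with Cons inv show ?thesis by auto
  qed
qed

lemma finite_inversions: "a \<in> A \<Longrightarrow> set w \<subseteq> I \<Longrightarrow> finite (inversions a w)"
  using inversions_finite_card_parity by blast

lemma card_inversions_le: "a \<in> A \<Longrightarrow> set w \<subseteq> I \<Longrightarrow> card (inversions a w) \<le> length w"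
  using inversions_finite_card_parity by blast

lemma card_inversions_parity: "a \<in> A \<Longrightarrow> set w \<subseteq> I \<Longrightarrow> even (card (inversions a w) + length w)"
  using inversions_finite_card_parity by blast

lemma card_inversions_Cons_pos:
  assumes "a \<in> A" "set w \<subseteq> I" "i \<in> I" "\<gamma> \<in> Rpos a" "wmap a w \<gamma> = alpha i"
  shows "card (inversions a (i # w)) = Suc (card (inversions a w))"
  using inversions_Cons_pos[OF assms] finite_inversions[OF assms(1,2)] by simp

lemma card_inversions_Cons_neg:
  assumes "a \<in> A" "set w \<subseteq> I" "i \<in> I" "\<gamma> \<in> Rpos a" "wmap a w \<gamma> = - alpha i"
  shows "Suc (card (inversions a (i # w))) = card (inversions a w)"
  using inversions_Cons_neg[OF assms] finite_inversions[OF assms(1,2)]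
  by (metis card_Suc_Diff1)

lemma card_inversions_Cons_maximal:
  assumes a: "a \<in> A" and w: "set w \<subseteq> I" and i: "i \<in> I"
    and maximal: "card (inversions a (i # w)) = length (i # w)"
  obtains \<gamma> where "\<gamma> \<in> Rpos a" "wmap a w \<gamma> = alpha i"
  using a w i
proof (cases rule: simple_root_preimage)
  case (neg \<gamma>)
  then have "Suc (card (inversions a (i # w))) = card (inversions a w)"
    by (rule card_inversions_Cons_neg[OF a w i])
  then show thesis using maximal card_inversions_le[OF a w] by simp
qed

lemma alpha_inversion_snoc:
  assumes a: "a \<in> A" and w: "set w \<subseteq> I" and k: "k \<in> I"
    and pos: "wmap a w (alpha k) \<in> Rpos (tgt a w)"
  shows "alpha k \<in> inversions (rho k a) (w @ [k])"
proof -
  have "wmap (rho k a) (w @ [k]) (alpha k) = - wmap a w (alpha k)"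
    using wmap_snoc[OF k a] sigma_alpha[OF k rho_in_A[OF k a]]
    by (simp add: int_linear_neg[OF int_linear_word_map])
  moreover have "- wmap a w (alpha k) \<notin> Rpos (tgt a w)"
    using neg_not_pos_root[OF tgt_in_A[OF a w] pos] .
  ultimately show ?thesis
    unfolding inversions_def using alpha_pos_root[OF rho_in_A[OF k a] k] tgt_snoc[OF k a] by simp
qed

text \<open>If \<open>w\<close> already inverts \<open>\<alpha>\<^sub>k\<close>, then \<open>\<sigma>\<^sub>k\<close> maps the inversions of \<open>w @ [k]\<close> into
  those of \<open>w\<close> other than \<open>\<alpha>\<^sub>k\<close>.\<close>

lemma card_inversions_snoc_less:
  assumes a: "a \<in> A" and w: "set w \<subseteq> I" and k: "k \<in> I"
    and neg: "wmap a w (alpha k) \<notin> Rpos (tgt a w)"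
  shows "card (inversions (rho k a) (w @ [k])) < card (inversions a w)"
proof -
  have b: "rho k a \<in> A" using rho_in_A[OF k a] .
  have sigma_back: "sigma I C k a (sigma I C k (rho k a) \<alpha>) = \<alpha>" for \<alpha>
    using sigma_sigma[OF k b] rho_rho[OF k a] by simp
  have "inversions (rho k a) (w @ [k]) \<subseteq> sigma I C k a ` (inversions a w - {alpha k})"
  proof
    fix \<alpha> assume "\<alpha> \<in> inversions (rho k a) (w @ [k])"
    then have \<alpha>: "\<alpha> \<in> Rpos (rho k a)" and inv: "wmap a w (sigma I C k (rho k a) \<alpha>) \<notin> Rpos (tgt a w)"
      unfolding inversions_def using wmap_snoc[OF k a] tgt_snoc[OF k a] by auto
    have "\<alpha> \<noteq> alpha k"
    proof
      assume "\<alpha> = alpha k"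
      then have "wmap a w (sigma I C k (rho k a) \<alpha>) = - wmap a w (alpha k)"
        using sigma_alpha[OF k b] by (simp add: int_linear_neg[OF int_linear_word_map])
      moreover have "- wmap a w (alpha k) \<in> Rpos (tgt a w)"
        using root_pos_or_neg[OF tgt_in_A[OF a w] wmap_root[OF a w alpha_root[OF a k]]] neg by blast
      ultimately show False using inv by simp
    qed
    then have \<beta>: "sigma I C k (rho k a) \<alpha> \<in> Rpos a"
      using sigma_pos_root[OF k b \<alpha>] rho_rho[OF k a] by simp
    have "sigma I C k (rho k a) \<alpha> \<noteq> alpha k"
      using sigma_back[of \<alpha>] sigma_alpha[OF k a] neg_not_pos_root[OF b alpha_pos_root[OF b k]] \<alpha>
      by force
    with \<beta> inv have "sigma I C k (rho k a) \<alpha> \<in> inversions a w - {alpha k}"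
      by (simp add: inversions_def)
    then show "\<alpha> \<in> sigma I C k a ` (inversions a w - {alpha k})"
      using sigma_back[of \<alpha>] by (metis image_eqI)
  qed
  moreover have "alpha k \<in> inversions a w"
    using neg alpha_pos_root[OF a k] by (simp add: inversions_def)
  ultimately show ?thesis
    using finite_inversions[OF a w]
    by (meson card_Diff1_less card_image_le finite_Diff card_mono finite_imageI le_less_trans)
qed

lemma word_equiv_length_parity:
  assumes "a \<in> A" "set w \<subseteq> I" "set w' \<subseteq> I" "word_equiv a w w'"
  shows "even (length w + length w')"
proof -
  have "inversions a w = inversions a w'"
    using assms(4) by (simp add: word_equiv_def inversions_def)
  then show ?thesis using card_inversions_parity[OF assms(1,2)] card_inversions_parity[OF assms(1,3)]
    by auto
qed

text \<open>By parity, a reduced word that stops being reduced when \<open>j\<close> is appended can be rewritten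
  to end in \<open>j\<close>.\<close>

lemma reduced_snoc_not_reduced:
  assumes a: "a \<in> A" and j: "j \<in> I" and r: "reduced a v" and nr: "\<not> reduced (rho j a) (v @ [j])"
  obtains v' where "set v' \<subseteq> I" "Suc (length v') = length v" "word_equiv a v (v' @ [j])"
proof -
  have v: "set v \<subseteq> I" using r unfolding reduced_def by blast
  obtain v'' where v'': "set v'' \<subseteq> I" "word_equiv (rho j a) (v @ [j]) v''"
      "length v'' < Suc (length v)"
    using nr v j unfolding reduced_def by force
  have "word_equiv a ((v @ [j]) @ [j]) (v'' @ [j])"
    by (rule word_equiv_append_left) (use v'' in simp)
  moreover have "word_equiv a ((v @ [j]) @ [j]) v"
    using word_equiv_cancel_square[OF a _ j, of "[]" v] by simp
  ultimately have e: "word_equiv a v (v'' @ [j])" by (meson word_equiv_sym word_equiv_trans)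
  moreover have "set (v'' @ [j]) \<subseteq> I" using v''(1) j by simp
  ultimately have "length v \<le> length (v'' @ [j])" using r unfolding reduced_def by blast
  moreover have "even (length (v @ [j]) + length v'')"
    using word_equiv_length_parity[OF rho_in_A[OF j a] _ v''(1,2)] v j by simp
  ultimately have "Suc (length v'') = length v" using v''(3) by simp presburger
  with v''(1) e that show thesis by blast
qed

abbreviation rank2_roots :: "'a \<Rightarrow> 'i \<Rightarrow> 'i \<Rightarrow> ('i \<Rightarrow> int) set" where
  "rank2_roots a j k \<equiv> m_ij (R a) j k"

lemma rank2_roots_sym: "rank2_roots a j k = rank2_roots a k j"
  unfolding m_ij_def by (auto simp: add.commute) (metis add.commute)+

lemma rank2_roots_iff:
  assumes "j \<noteq> k"
  shows "v \<in> rank2_roots a j k \<longleftrightarrow> v \<in> Rpos a \<and> v \<in> ZI {j, k}"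
proof
  assume "v \<in> rank2_roots a j k"
  then obtain p q where "v \<in> R a" "v = (\<lambda>l. p * alpha j l + q * alpha k l)" "p \<ge> 0" "q \<ge> 0"
    unfolding m_ij_def by blast
  then show "v \<in> Rpos a \<and> v \<in> ZI {j, k}"
    by (auto simp: pos_roots_def ZI_def alpha_def)
next
  assume v: "v \<in> Rpos a \<and> v \<in> ZI {j, k}"
  then have "v = (\<lambda>l. v j * alpha j l + v k * alpha k l)"
    using ZI_pair_expansion[OF assms] by blast
  with v show "v \<in> rank2_roots a j k"
    unfolding m_ij_def using pos_root_nonneg pos_rootD by blast
qed

lemma alpha_rank2_roots:
  "j \<noteq> k \<Longrightarrow> a \<in> A \<Longrightarrow> j \<in> I \<Longrightarrow> k \<in> I \<Longrightarrow> alpha j \<in> rank2_roots a j k \<and> alpha k \<in> rank2_roots a j k"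
  by (simp add: rank2_roots_iff alpha_pos_root alpha_in_ZI)

lemma inversions_two_letters_subset:
  assumes a: "a \<in> A" and w: "set w \<subseteq> {j, k}" and jk: "j \<noteq> k" "j \<in> I" "k \<in> I"
  shows "inversions a w \<subseteq> rank2_roots a j k"
proof
  fix \<alpha> assume inv: "\<alpha> \<in> inversions a w"
  then have \<alpha>: "\<alpha> \<in> Rpos a" by (simp add: inversions_def)
  have "\<alpha> l = 0" if l: "l \<notin> {j, k}" for l
  proof (rule ccontr)
    assume "\<alpha> l \<noteq> 0"
    moreover have "wmap a w \<alpha> l = \<alpha> l"
      using w l by (intro word_map_other) blast
    ultimately have "wmap a w \<alpha> l > 0"
      using pos_root_nonneg[OF \<alpha>, of l] by simp
    moreover have wI: "set w \<subseteq> I" using w jk by blast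
    ultimately have "wmap a w \<alpha> \<in> Rpos (tgt a w)"
      by (intro pos_root_if_pos_coord[OF tgt_in_A[OF a wI] wmap_root[OF a wI pos_rootD[OF \<alpha>]]])
    with inv show False by (simp add: inversions_def)
  qed
  with \<alpha> show "\<alpha> \<in> rank2_roots a j k" by (simp add: rank2_roots_iff[OF jk(1)] ZI_def)
qed

lemma sigma_rank2_roots_subset:
  assumes a: "a \<in> A" and jk: "j \<noteq> k" "j \<in> I" "k \<in> I" and l: "l \<in> {j, k}"
  shows "sigma I C l a ` (rank2_roots a j k - {alpha l}) \<subseteq> rank2_roots (rho l a) j k - {alpha l}"
proof
  have lI: "l \<in> I" using l jk by auto
  fix v assume "v \<in> sigma I C l a ` (rank2_roots a j k - {alpha l})"
  then obtain \<beta> where \<beta>: "\<beta> \<in> Rpos a" "\<beta> \<in> ZI {j, k}" "\<beta> \<noteq> alpha l" and v: "v = sigma I C l a \<beta>"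
    using rank2_roots_iff[OF jk(1)] by blast
  have "v \<in> Rpos (rho l a)" using sigma_pos_root[OF lI a \<beta>(1,3)] v by simp
  moreover have "v \<in> ZI {j, k}"
    using \<beta>(2) l unfolding v ZI_def by (auto simp: sigma_other)
  moreover have "v \<noteq> alpha l"
  proof
    assume "v = alpha l"
    then have "\<beta> = - alpha l"
      using v sigma_sigma[OF lI a, of \<beta>] sigma_alpha[OF lI rho_in_A[OF lI a]] by simp
    then show False using \<beta>(1) neg_not_pos_root[OF a alpha_pos_root[OF a lI]] by simp
  qed
  ultimately show "v \<in> rank2_roots (rho l a) j k - {alpha l}"
    by (simp add: rank2_roots_iff[OF jk(1)])
qed

lemma bij_betw_sigma_rank2_roots:
  assumes a: "a \<in> A" and jk: "j \<noteq> k" "j \<in> I" "k \<in> I" and l: "l \<in> {j, k}"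
  shows "bij_betw (sigma I C l a) (rank2_roots a j k - {alpha l}) (rank2_roots (rho l a) j k - {alpha l})"
proof (rule bij_betw_byWitness[where f'="sigma I C l (rho l a)"])
  have lI: "l \<in> I" using l jk by auto
  show "\<forall>v\<in>rank2_roots a j k - {alpha l}. sigma I C l (rho l a) (sigma I C l a v) = v"
    using sigma_sigma[OF lI a] by blast
  show "\<forall>v\<in>rank2_roots (rho l a) j k - {alpha l}. sigma I C l a (sigma I C l (rho l a) v) = v"
    using sigma_sigma[OF lI rho_in_A[OF lI a]] rho_rho[OF lI a] by simp
  show "sigma I C l a ` (rank2_roots a j k - {alpha l}) \<subseteq> rank2_roots (rho l a) j k - {alpha l}"
    by (rule sigma_rank2_roots_subset[OF a jk l])
  show "sigma I C l (rho l a) ` (rank2_roots (rho l a) j k - {alpha l}) \<subseteq> rank2_roots a j k - {alpha l}"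
    using sigma_rank2_roots_subset[OF rho_in_A[OF lI a] jk l] rho_rho[OF lI a] by simp
qed

lemma finite_card_rank2_roots_rho:
  assumes a: "a \<in> A" and jk: "j \<noteq> k" "j \<in> I" "k \<in> I" and l: "l \<in> {j, k}"
  shows "finite (rank2_roots (rho l a) j k) = finite (rank2_roots a j k)"
    and "card (rank2_roots (rho l a) j k) = card (rank2_roots a j k)"
proof -
  have lI: "l \<in> I" using l jk by auto
  note bij = bij_betw_sigma_rank2_roots[OF a jk l]
  show fin: "finite (rank2_roots (rho l a) j k) = finite (rank2_roots a j k)"
    using bij_betw_finite[OF bij] by simp
  have "alpha l \<in> rank2_roots a j k" "alpha l \<in> rank2_roots (rho l a) j k"
    using alpha_rank2_roots[OF jk(1) _ jk(2,3)] a rho_in_A[OF lI a] l by auto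
  then show "card (rank2_roots (rho l a) j k) = card (rank2_roots a j k)"
    using bij_betw_same_card[OF bij] fin by (metis card.infinite card_Suc_Diff1)
qed

lemma finite_card_rank2_roots_tgt:
  assumes a: "a \<in> A" and jk: "j \<noteq> k" "j \<in> I" "k \<in> I" and w: "set w \<subseteq> {j, k}"
  shows "finite (rank2_roots (tgt a w) j k) = finite (rank2_roots a j k)
    \<and> card (rank2_roots (tgt a w) j k) = card (rank2_roots a j k)"
  using w
proof (induction w)
  case (Cons l w)
  then have "l \<in> {j, k}" "set w \<subseteq> {j, k}" by auto
  moreover have "tgt a w \<in> A" using tgt_in_A[OF a] \<open>set w \<subseteq> {j, k}\<close> jk by blast
  ultimately show ?case using Cons.IH finite_card_rank2_roots_rho[OF _ jk] by simp
qed simp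

lemma rank2_roots_bounded_if_simple_roots_inverted:
  assumes a: "a \<in> A" and jk: "j \<noteq> k" and w: "set w \<subseteq> I"
    and neg: "\<And>l. l \<in> {j, k} \<Longrightarrow> \<exists>\<gamma>\<in>Rpos a. wmap a w \<gamma> = - alpha l"
  shows "finite (rank2_roots (tgt a w) j k)" "card (rank2_roots (tgt a w) j k) \<le> length w"
proof -
  let ?b = "tgt a w"
  have rev_inverse: "\<And>v. wmap ?b (rev w) (wmap a w v) = v" by (rule wmap_rev[OF a w])
  have nonpos: "wmap ?b (rev w) (alpha l) m \<le> 0" if l: "l \<in> {j, k}" for l m
  proof -
    obtain \<gamma> where \<gamma>: "\<gamma> \<in> Rpos a" "wmap a w \<gamma> = - alpha l" using neg[OF l] by blast
    then have "wmap ?b (rev w) (alpha l) = - \<gamma>"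
      using rev_inverse[of \<gamma>] by (simp add: int_linear_neg[OF int_linear_word_map] minus_equation_iff)
    then show ?thesis using pos_root_nonneg[OF \<gamma>(1), of m] by simp
  qed
  have "rank2_roots ?b j k \<subseteq> inversions ?b (rev w)"
  proof
    fix \<delta> assume "\<delta> \<in> rank2_roots ?b j k"
    then have \<delta>: "\<delta> \<in> Rpos ?b" "\<delta> \<in> ZI {j, k}" by (simp_all add: rank2_roots_iff[OF jk])
    have "wmap ?b (rev w) \<delta>
        = (\<lambda>m. \<delta> j * wmap ?b (rev w) (alpha j) m + \<delta> k * wmap ?b (rev w) (alpha k) m)"
      by (subst ZI_pair_expansion[OF jk \<delta>(2)]) (rule int_linearD[OF int_linear_word_map])
    then have "wmap ?b (rev w) \<delta> m \<le> 0" for m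
      using nonpos[of j m] nonpos[of k m] pos_root_nonneg[OF \<delta>(1), of j] pos_root_nonneg[OF \<delta>(1), of k]
      by (simp add: add_nonpos_nonpos mult_nonneg_nonpos)
    then have "wmap ?b (rev w) \<delta> \<notin> Rpos a"
      using nonpos_not_pos_root[OF a] by blast
    with \<delta>(1) show "\<delta> \<in> inversions ?b (rev w)"
      by (simp add: inversions_def tgt_rev[OF a w])
  qed
  moreover have "finite (inversions ?b (rev w))" "card (inversions ?b (rev w)) \<le> length w"
    using finite_inversions[OF tgt_in_A[OF a w], of "rev w"]
      card_inversions_le[OF tgt_in_A[OF a w], of "rev w"] w by auto
  ultimately show "finite (rank2_roots ?b j k)" "card (rank2_roots ?b j k) \<le> length w"
    by (auto intro: finite_subset dest: card_mono)
qed

text \<open>Along the alternating word the inversion set grows by one at every step, as long as the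
  length does not exceed \<open>m = |rank2_roots a j k|\<close>: a step where it shrank would produce a word
  sending both \<open>\<alpha>\<^sub>j\<close> and \<open>\<alpha>\<^sub>k\<close> to negative roots, hence inverting all \<open>m\<close> positive roots of
  the rank-two subsystem with fewer than \<open>m\<close> letters.\<close>

lemma card_inversions_alt_word:
  assumes a: "a \<in> A" and jk: "j \<noteq> k" "j \<in> I" "k \<in> I"
    and short: "infinite (rank2_roots a j k) \<or> t \<le> card (rank2_roots a j k)"
  shows "card (inversions a (alt_word j k t)) = t"
  using short
proof (induction t)
  case 0
  then show ?case by (simp add: inversions_def)
next
  case (Suc t)
  let ?u = "alt_word j k t"
  have IH: "card (inversions a ?u) = t" using Suc by auto
  have u: "set ?u \<subseteq> I" using set_alt_word[of j k t] jk by blast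
  define l where "l = (if even t then j else k)"
  have l: "l \<in> I" "alt_word j k (Suc t) = l # ?u" using jk by (auto simp: l_def)
  from a u l(1) show ?case
  proof (cases rule: simple_root_preimage)
    case (pos \<gamma>)
    then show ?thesis using card_inversions_Cons_pos[OF a u l(1) pos] IH l(2) by simp
  next
    case (neg \<gamma>)
    then obtain t' where t': "t = Suc t'"
      using neg_not_pos_root[OF a alpha_pos_root[OF a l(1)]] by (cases t) auto
    define l' where "l' = (if even t' then j else k)"
    have l': "l' \<in> I" "?u = l' # alt_word j k t'" using jk by (auto simp: l'_def t')
    have ll': "{l, l'} = {j, k}" using jk by (auto simp: l_def l'_def t')
    have u': "set (alt_word j k t') \<subseteq> I" using set_alt_word[of j k t'] jk by blast
    obtain \<gamma>' where \<gamma>': "\<gamma>' \<in> Rpos a" "wmap a (alt_word j k t') \<gamma>' = alpha l'"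
      using card_inversions_Cons_maximal[OF a u' l'(1)] IH l'(2) t' by auto
    then have "wmap a ?u \<gamma>' = - alpha l'"
      using l'(2) sigma_alpha[OF l'(1) tgt_in_A[OF a u']] by simp
    with neg have "\<exists>\<gamma>\<in>Rpos a. wmap a ?u \<gamma> = - alpha i" if "i \<in> {j, k}" for i
    proof -
      have "i = l \<or> i = l'" using that ll' by (metis insert_iff singletonD)
      with neg \<open>wmap a ?u \<gamma>' = - alpha l'\<close> \<gamma>'(1) show ?thesis by blast
    qed
    then have "finite (rank2_roots (tgt a ?u) j k)" "card (rank2_roots (tgt a ?u) j k) \<le> t"
      using rank2_roots_bounded_if_simple_roots_inverted[OF a jk(1) u] by auto
    with Suc.prems show ?thesis
      using finite_card_rank2_roots_tgt[OF a jk set_alt_word] by auto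
  qed
qed

lemma inversions_alt_word_card:
  assumes a: "a \<in> A" and jk: "j \<noteq> k" "j \<in> I" "k \<in> I" and fin: "finite (rank2_roots a j k)"
  shows "inversions a (alt_word j k (card (rank2_roots a j k))) = rank2_roots a j k"
  using card_subset_eq[OF fin inversions_two_letters_subset[OF a set_alt_word jk]]
    card_inversions_alt_word[OF a jk] by simp

lemma pos_root_two_letters_outside_rank2:
  assumes a: "a \<in> A" and jk: "j \<noteq> k" "j \<in> I" "k \<in> I" and w: "set w \<subseteq> {j, k}"
    and \<delta>: "\<delta> \<in> Rpos a" "\<delta> \<notin> rank2_roots a j k"
  shows "wmap a w \<delta> \<in> Rpos (tgt a w)"
  using inversions_two_letters_subset[OF a w jk] \<delta> by (auto simp: inversions_def)

end

context cartan
begin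

definition det2 :: "'i \<Rightarrow> 'i \<Rightarrow> (('i \<Rightarrow> int) \<Rightarrow> ('i \<Rightarrow> int)) \<Rightarrow> int" where
  "det2 j k f = f (alpha j) j * f (alpha k) k - f (alpha j) k * f (alpha k) j"

lemma sigma_at_ZI_pair:
  assumes a: "a \<in> A" and jk: "j \<noteq> k" "j \<in> I" "k \<in> I" and v: "v \<in> ZI {j, k}"
  shows "sigma I C j a v j = - v j - C a j k * v k"
proof -
  have "(\<Sum>i\<in>I. C a j i * v i) = (\<Sum>i\<in>{j, k}. C a j i * v i)"
    using finite_I jk v by (intro sum.mono_neutral_right) (auto simp: ZI_def)
  then show ?thesis using jk C_diag[OF a jk(2)] by (simp add: sigma_at)
qed

lemma det2_wmap:
  assumes a: "a \<in> A" and jk: "j \<noteq> k" "j \<in> I" "k \<in> I"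
  shows "set w \<subseteq> {j, k} \<Longrightarrow> det2 j k (wmap a w) = (-1) ^ length w"
proof (induction w)
  case Nil
  then show ?case using jk by (simp add: det2_def alpha_def)
next
  case (Cons l w)
  then have w: "set w \<subseteq> {j, k}" and l: "l \<in> {j, k}" by auto
  define b where "b = tgt a w"
  have b: "b \<in> A" unfolding b_def using tgt_in_A[OF a] w jk by blast
  define u where "u = wmap a w (alpha j)"
  define v where "v = wmap a w (alpha k)"
  have uv: "u \<in> ZI {j, k}" "v \<in> ZI {j, k}"
    unfolding u_def v_def using w by (auto intro!: word_map_ZI alpha_in_ZI)
  have IH: "u j * v k - u k * v j = (-1) ^ length w"
    using Cons.IH w unfolding det2_def u_def v_def by simp
  have "det2 j k (wmap a (l # w))
      = sigma I C l b u j * sigma I C l b v k - sigma I C l b u k * sigma I C l b v j"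
    by (simp add: det2_def u_def v_def b_def)
  also have "\<dots> = - (u j * v k - u k * v j)"
  proof (cases "l = j")
    case True
    then show ?thesis using jk
      by (simp add: sigma_other sigma_at_ZI_pair[OF b jk uv(1)] sigma_at_ZI_pair[OF b jk uv(2)]
          algebra_simps)
  next
    case False
    with l have "l = k" by simp
    moreover have "u \<in> ZI {k, j}" "v \<in> ZI {k, j}" using uv by (simp_all add: insert_commute)
    ultimately show ?thesis using jk
      by (simp add: sigma_other sigma_at_ZI_pair[OF b jk(1)[symmetric] jk(3,2)] algebra_simps)
  qed
  finally show ?case using IH by (simp add: comp_def)
qed

end

context root_sys
begin

lemma pos_two_letter_image_alpha:
  assumes jk: "j \<noteq> k" and l: "l \<notin> {j, k}" and w: "set w \<subseteq> {j, k}"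
    and pos: "wmap a w (alpha l) \<in> Rpos b"
  obtains p q where "p \<ge> 0" "q \<ge> 0" "wmap a w (alpha l) = (\<lambda>i. alpha l i + (p * alpha j i + q * alpha k i))"
proof -
  define d where "d = (\<lambda>i. wmap a w (alpha l) i - alpha l i)"
  have "wmap a w (alpha l) i = alpha l i" if "i \<notin> {j, k}" for i
    using w that by (intro word_map_other) blast
  then have "d \<in> ZI {j, k}" by (simp add: d_def ZI_def)
  then have d: "d = (\<lambda>i. d j * alpha j i + d k * alpha k i)" by (rule ZI_pair_expansion[OF jk])
  have "wmap a w (alpha l) = (\<lambda>i. alpha l i + d i)" by (simp add: d_def)
  also have "\<dots> = (\<lambda>i. alpha l i + (d j * alpha j i + d k * alpha k i))" by (subst (1) d) simp
  finally have "wmap a w (alpha l) = (\<lambda>i. alpha l i + (d j * alpha j i + d k * alpha k i))" .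
  moreover have "d j \<ge> 0" "d k \<ge> 0"
    using pos_root_nonneg[OF pos, of j] pos_root_nonneg[OF pos, of k] l
    by (auto simp: d_def alpha_def)
  ultimately show thesis using that by blast
qed

end

text \<open>The braid relation: for \<open>m = m\<^sub>j\<^sub>k\<^sup>x\<close> finite, axiom (R4) makes the alternating word of length
  \<open>2m\<close> a loop \<open>\<Omega>\<close> at \<open>x\<close>; it sends positive roots to positive roots, hence permutes the finite
  rank-two system, fixes \<open>\<alpha>\<^sub>j\<close> and \<open>\<alpha>\<^sub>k\<close> (its determinant on their span is \<open>1\<close>), and so is the
  identity.\<close>

locale rank2_finite = root_sys +
  fixes x j k
  assumes x: "x \<in> A" and jk: "j \<noteq> k" "j \<in> I" "k \<in> I"
    and finite_rank2: "finite (rank2_roots x j k)"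
begin

abbreviation m :: nat where "m \<equiv> card (rank2_roots x j k)"

abbreviation Omega where
  "Omega \<equiv> wmap x (alt_word j k (2 * m))"

lemma alt_word_in_I: "set (alt_word j k t) \<subseteq> I" "set (alt_word k j t) \<subseteq> I"
  using set_alt_word[of j k t] set_alt_word[of k j t] jk by auto

lemma tgt_Omega: "tgt x (alt_word j k (2 * m)) = x"
  using rho_rho_power_m_ij[OF x jk(3,2) jk(1)[symmetric]] finite_rank2
  by (simp add: word_end_alt_word_even rank2_roots_sym[of x j k])

lemma Omega_pos_root:
  assumes \<delta>: "\<delta> \<in> Rpos x"
  shows "Omega \<delta> \<in> Rpos x"
proof (cases "\<delta> \<in> rank2_roots x j k")
  case True
  define y where "y = tgt x (alt_word j k m)"
  define u where "u = (if even m then alt_word j k m else alt_word k j m)"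
  have split: "alt_word j k (2 * m) = u @ alt_word j k m"
    by (simp add: u_def alt_word_double)
  have y: "y \<in> A" unfolding y_def using tgt_in_A[OF x alt_word_in_I(1)] .
  have tgt_u: "tgt y u = x"
    using tgt_Omega by (simp add: split word_end_append y_def)
  have rank2_y: "finite (rank2_roots y j k)" "card (rank2_roots y j k) = m"
    using finite_card_rank2_roots_tgt[OF x jk set_alt_word] finite_rank2 by (auto simp: y_def)
  have inv_u: "inversions y u = rank2_roots y j k"
    using inversions_alt_word_card[OF y jk] inversions_alt_word_card[OF y jk(1)[symmetric] jk(3,2)]
      rank2_y rank2_roots_sym[of y j k] by (simp add: u_def)
  have u: "set u \<subseteq> I" using alt_word_in_I by (simp add: u_def)
  define \<beta> where "\<beta> = - wmap x (alt_word j k m) \<delta>"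
  have "\<delta> \<in> inversions x (alt_word j k m)"
    using True inversions_alt_word_card[OF x jk finite_rank2] by simp
  then have "wmap x (alt_word j k m) \<delta> \<notin> Rpos y" by (simp add: inversions_def y_def)
  moreover have "wmap x (alt_word j k m) \<delta> \<in> R y"
    unfolding y_def by (rule wmap_root[OF x alt_word_in_I(1) pos_rootD[OF \<delta>]])
  ultimately have \<beta>: "\<beta> \<in> Rpos y"
    unfolding \<beta>_def using root_pos_or_neg[OF y] by blast
  moreover have "wmap x (alt_word j k m) \<delta> \<in> ZI {j, k}"
    using True by (intro word_map_ZI[OF set_alt_word]) (simp add: rank2_roots_iff[OF jk(1)])
  then have "\<beta> \<in> ZI {j, k}" by (simp add: \<beta>_def ZI_def)
  ultimately have "\<beta> \<in> inversions y u" by (simp add: inv_u rank2_roots_iff[OF jk(1)])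
  then have "wmap y u \<beta> \<notin> Rpos x" by (simp add: inversions_def tgt_u)
  moreover have "wmap y u \<beta> \<in> R x"
    using wmap_root[OF y u pos_rootD[OF \<beta>]] tgt_u by simp
  ultimately have "- wmap y u \<beta> \<in> Rpos x" using root_pos_or_neg[OF x] by blast
  then show ?thesis
    by (simp add: split word_map_append y_def \<beta>_def int_linear_neg[OF int_linear_word_map])
next
  case False
  then show ?thesis
    using pos_root_two_letters_outside_rank2[OF x jk set_alt_word[of j k "2 * m"] \<delta>] tgt_Omega by simp
qed

lemma Omega_rank2_roots: "Omega ` rank2_roots x j k = rank2_roots x j k"
proof (rule endo_inj_surj[OF finite_rank2])
  show "Omega ` rank2_roots x j k \<subseteq> rank2_roots x j k"
    using Omega_pos_root word_map_ZI[OF set_alt_word] by (auto simp: rank2_roots_iff[OF jk(1)])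
  show "inj_on Omega (rank2_roots x j k)"
    using inj_wmap[OF x alt_word_in_I(1)] by (simp add: inj_on_def inj_def)
qed

lemma rank2_roots_coord_sum:
  assumes v: "v \<in> rank2_roots x j k"
  shows "v j + v k \<ge> 1"
proof (rule ccontr)
  have v': "v \<in> Rpos x" "v \<in> ZI {j, k}" using v by (simp_all add: rank2_roots_iff[OF jk(1)])
  assume "\<not> v j + v k \<ge> 1"
  then have "v j = 0" "v k = 0" using pos_root_nonneg[OF v'(1), of j] pos_root_nonneg[OF v'(1), of k] by auto
  then have "v = (\<lambda>l. 0)" using ZI_pair_expansion[OF jk(1) v'(2)] by simp
  then show False using zero_not_root[OF x] pos_rootD[OF v'(1)] by simp
qed

lemma Omega_expansion:
  "v \<in> ZI {j, k} \<Longrightarrow> Omega v = (\<lambda>l. v j * Omega (alpha j) l + v k * Omega (alpha k) l)"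
  by (subst ZI_pair_expansion[OF jk(1)]) (simp_all add: int_linearD[OF int_linear_word_map])

text \<open>A root of the rank-two system with coordinate sum \<open>1\<close> is an image of \<open>\<alpha>\<^sub>j\<close> or \<open>\<alpha>\<^sub>k\<close>, since
  \<open>\<Omega>\<close> is onto and the coordinate sums of \<open>\<Omega> \<alpha>\<^sub>j\<close>, \<open>\<Omega> \<alpha>\<^sub>k\<close> are at least \<open>1\<close>.\<close>

lemma Omega_preimage_coord_sum_1:
  assumes e: "e \<in> rank2_roots x j k" "e j + e k = 1"
  shows "e = Omega (alpha j) \<or> e = Omega (alpha k)"
proof -
  obtain \<delta> where \<delta>: "\<delta> \<in> rank2_roots x j k" "Omega \<delta> = e"
    using Omega_rank2_roots e(1) by (metis imageE)
  then have \<delta>': "\<delta> \<in> ZI {j, k}" "\<delta> j \<ge> 0" "\<delta> k \<ge> 0"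
    by (auto simp: rank2_roots_iff[OF jk(1)] pos_roots_def)
  have "Omega (alpha j) \<in> rank2_roots x j k" "Omega (alpha k) \<in> rank2_roots x j k"
    using Omega_rank2_roots alpha_rank2_roots[OF jk(1) x jk(2,3)] by blast+
  then have "Omega (alpha j) j + Omega (alpha j) k \<ge> 1" "Omega (alpha k) j + Omega (alpha k) k \<ge> 1"
    by (simp_all add: rank2_roots_coord_sum)
  moreover have "\<delta> j * (Omega (alpha j) j + Omega (alpha j) k) + \<delta> k * (Omega (alpha k) j + Omega (alpha k) k) = 1"
    using e(2) \<delta>(2) Omega_expansion[OF \<delta>'(1)] by (simp add: fun_eq_iff algebra_simps)
  ultimately consider "\<delta> j = 1" "\<delta> k = 0" | "\<delta> j = 0" "\<delta> k = 1"
    using nonneg_int_combination_eq_1 \<delta>'(2,3) by blast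
  then show ?thesis
    using \<delta>(2) Omega_expansion[OF \<delta>'(1)] by cases (simp_all add: fun_eq_iff)
qed

lemma Omega_alpha_pair: "Omega (alpha j) = alpha j \<and> Omega (alpha k) = alpha k"
proof -
  have aj: "alpha j \<in> rank2_roots x j k" and ak: "alpha k \<in> rank2_roots x j k"
    using alpha_rank2_roots[OF jk(1) x jk(2,3)] by auto
  have "alpha j = Omega (alpha j) \<or> alpha j = Omega (alpha k)"
    by (rule Omega_preimage_coord_sum_1[OF aj]) (use jk(1) in \<open>simp add: alpha_def\<close>)
  moreover have "alpha k = Omega (alpha j) \<or> alpha k = Omega (alpha k)"
    by (rule Omega_preimage_coord_sum_1[OF ak]) (use jk(1) in \<open>simp add: alpha_def\<close>)
  moreover have "alpha j \<noteq> alpha k" using jk(1) by (metis alpha_def zero_neq_one)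
  moreover have "\<not> (Omega (alpha j) = alpha k \<and> Omega (alpha k) = alpha j)"
    using det2_wmap[OF x jk set_alt_word, of "2 * m"] jk(1) by (auto simp: det2_def alpha_def)
  ultimately show ?thesis by metis
qed

lemma Omega_alpha:
  assumes l: "l \<in> I"
  shows "Omega (alpha l) = alpha l"
proof (cases "l \<in> {j, k}")
  case True
  then show ?thesis using Omega_alpha_pair by auto
next
  case False
  interpret swapped: rank2_finite I A rho C R x k j
    using x jk finite_rank2 rank2_roots_sym[of x j k] by unfold_locales auto
  let ?Omega' = "wmap x (alt_word k j (2 * m))"
  have m: "card (rank2_roots x k j) = m" using rank2_roots_sym[of x j k] by simp
  have inverse: "?Omega' (Omega v) = v" for v
    using wmap_rev[OF x alt_word_in_I(1), of "2 * m" v] tgt_Omega rev_alt_word[of j k "2 * m"] by simp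
  text \<open>Both loops move \<open>\<alpha>\<^sub>l\<close> by a nonnegative combination of \<open>\<alpha>\<^sub>j\<close> and \<open>\<alpha>\<^sub>k\<close>; being mutually
    inverse and fixing \<open>\<alpha>\<^sub>j\<close>, \<open>\<alpha>\<^sub>k\<close>, the two combinations add up to zero.\<close>
  obtain p q where pq: "p \<ge> 0" "q \<ge> 0" "Omega (alpha l) = (\<lambda>i. alpha l i + (p * alpha j i + q * alpha k i))"
    using pos_two_letter_image_alpha[OF jk(1) False set_alt_word Omega_pos_root[OF alpha_pos_root[OF x l]]]
    by blast
  obtain p' q' where pq': "p' \<ge> 0" "q' \<ge> 0"
      "?Omega' (alpha l) = (\<lambda>i. alpha l i + (p' * alpha j i + q' * alpha k i))"
  proof -
    have "set (alt_word k j (2 * m)) \<subseteq> {j, k}" using set_alt_word[of k j] by auto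
    then show thesis
      using pos_two_letter_image_alpha[OF jk(1) False _ swapped.Omega_pos_root[OF alpha_pos_root[OF x l]]]
        that m by auto
  qed
  have "alpha l = ?Omega' (Omega (alpha l))" by (rule inverse[symmetric])
  also have "\<dots> = ?Omega' (\<lambda>i. 1 * alpha l i + 1 * (\<lambda>i. p * alpha j i + q * alpha k i) i)"
    by (simp add: pq(3))
  also have "\<dots> = (\<lambda>i. ?Omega' (alpha l) i + (p * ?Omega' (alpha j) i + q * ?Omega' (alpha k) i))"
    by (simp only: int_linearD[OF int_linear_word_map]) simp
  also have "\<dots> = (\<lambda>i. alpha l i + ((p + p') * alpha j i + (q + q') * alpha k i))"
    using swapped.Omega_alpha_pair m pq'(3) by (simp add: fun_eq_iff algebra_simps)
  finally have "p + p' = 0" "q + q' = 0"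
    using jk(1) False by (auto simp: fun_eq_iff alpha_def dest: spec[of _ j] spec[of _ k])
  then have "p = 0" "q = 0" using pq(1,2) pq'(1,2) by linarith+
  then show ?thesis using pq(3) by simp
qed

lemma Omega_id: "Omega = id"
proof -
  have "Omega = wmap x []"
    by (rule word_map_eqI[OF finite_I alt_word_in_I(1)]) (simp_all add: Omega_alpha)
  then show ?thesis by simp
qed

lemma braid_relation: "word_equiv x (alt_word j k m) (alt_word k j m)"
proof -
  define u where "u = (if even m then alt_word j k m else alt_word k j m)"
  have split: "alt_word j k (2 * m) = u @ alt_word j k m"
    by (simp add: u_def alt_word_double)
  have rev_u: "rev u = alt_word k j m" by (simp add: u_def rev_alt_word)
  have u: "set u \<subseteq> I" using alt_word_in_I by (simp add: u_def)
  let ?y = "tgt x (alt_word j k m)"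
  have y: "?y \<in> A" using tgt_in_A[OF x alt_word_in_I(1)] .
  have tgt_u: "tgt ?y u = x" using tgt_Omega by (simp add: split word_end_append)
  have "tgt x (alt_word k j m) = ?y" using tgt_rev[OF y u] tgt_u rev_u by simp
  moreover have "wmap x (alt_word k j m) v = wmap x (alt_word j k m) v" for v
  proof -
    have "wmap ?y u (wmap x (alt_word j k m) v) = v"
      using fun_cong[OF Omega_id, of v] by (simp add: split word_map_append)
    then show ?thesis using wmap_rev[OF y u, of "wmap x (alt_word j k m) v"] tgt_u rev_u by simp
  qed
  ultimately show ?thesis by (auto simp: word_equiv_def)
qed

lemma reduced_alt_word_snoc_shorter:
  assumes r: "reduced (rho k x) (alt_word j k t @ [k])"
  shows "t < m"
proof (rule ccontr)
  assume "\<not> t < m"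
  have "m > 0"
    using finite_rank2 alpha_rank2_roots[OF jk(1) x jk(2,3)] card_gt_0_iff by blast
  then obtain m' where m': "m = Suc m'" by (cases m) auto
  define p where "p = (if even m then alt_word j k (t - m) else alt_word k j (t - m))"
  have split: "alt_word j k t = p @ alt_word j k m"
    using alt_word_add[of j k "t - m" m] \<open>\<not> t < m\<close> by (simp add: p_def)
  have p: "set p \<subseteq> I" using alt_word_in_I by (simp add: p_def)
  text \<open>By the braid relation the word ends in \<open>alt_word k j m = alt_word j k m' @ [k]\<close>, and the
    appended \<open>k\<close> cancels.\<close>
  have "alt_word k j m = alt_word j k m' @ [k]" unfolding m' by (rule alt_word_Suc_snoc)
  then have "word_equiv x (alt_word j k t) (p @ alt_word j k m' @ [k])"
    using word_equiv_append_right[OF braid_relation, of p] split by simp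
  then have "word_equiv (rho k x) (alt_word j k t @ [k]) ((p @ alt_word j k m' @ [k]) @ [k])"
    using rho_rho[OF jk(3) x] by (intro word_equiv_append_left) simp
  moreover have "word_equiv (rho k x) ((p @ alt_word j k m') @ [k, k] @ []) ((p @ alt_word j k m') @ [])"
    by (rule word_equiv_cancel_square[OF rho_in_A[OF jk(3) x] _ jk(3)]) simp
  ultimately have "word_equiv (rho k x) (alt_word j k t @ [k]) (p @ alt_word j k m')"
    by (auto elim: word_equiv_trans)
  moreover have "set (p @ alt_word j k m') \<subseteq> I" using p alt_word_in_I by simp
  ultimately have "length (alt_word j k t @ [k]) \<le> length (p @ alt_word j k m')"
    using r unfolding reduced_def by blast
  then show False using split m' by simp
qed

end

context root_sys
begin

text \<open>A reduced two-letter word \<open>u\<close> (ending in \<open>j\<close>) that stays reduced after appending \<open>k\<close> is the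
  alternating word of some length \<open>r < m\<^sub>j\<^sub>k\<close>; counting inversions along \<open>alt_word k j (r + 1)\<close>
  shows that \<open>u\<close> does not invert \<open>\<alpha>\<^sub>k\<close>.\<close>

lemma rank2_reduced_snoc_pos:
  assumes a: "a \<in> A" and jk: "j \<noteq> k" "j \<in> I" "k \<in> I" and u: "set u \<subseteq> {j, k}"
    and r1: "reduced a u" and r2: "reduced (rho k a) (u @ [k])"
  shows "wmap a u (alpha k) \<in> rank2_roots (tgt a u) j k"
proof -
  have uI: "set u \<subseteq> I" using r1 unfolding reduced_def by blast
  have "u = [] \<or> last u = j" using reduced_snoc_last[OF a jk(3) r2] u last_in_set by fastforce
  then have u_alt: "u = alt_word j k r" if "r = length u" for r
    using stutter_free_two_letters_alt_word[OF jk(1) u reduced_stutter_free[OF a r1]] that by blast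
  have short: "infinite (rank2_roots a j k) \<or> length u < card (rank2_roots a j k)"
  proof (cases "finite (rank2_roots a j k)")
    case True
    interpret rank2_finite I A rho C R a j k using a jk True by unfold_locales
    show ?thesis using reduced_alt_word_snoc_shorter r2 u_alt by simp
  qed simp
  have "card (inversions a (alt_word j k (length u))) = length u"
    using card_inversions_alt_word[OF a jk] short by auto
  moreover have "infinite (rank2_roots (rho k a) k j) \<or> Suc (length u) \<le> card (rank2_roots (rho k a) k j)"
    using short finite_card_rank2_roots_rho[OF a jk, of k] rank2_roots_sym[of "rho k a" j k] by auto
  then have "card (inversions (rho k a) (alt_word k j (Suc (length u)))) = Suc (length u)"
    by (rule card_inversions_alt_word[OF rho_in_A[OF jk(3) a] jk(1)[symmetric] jk(3,2)])
  moreover have "u @ [k] = alt_word k j (Suc (length u))"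
    using arg_cong[OF u_alt[OF refl], of "\<lambda>w. w @ [k]"] alt_word_Suc_snoc[of k j] by simp
  ultimately have "card (inversions (rho k a) (u @ [k])) > card (inversions a u)"
    using u_alt[OF refl] by simp
  then have "wmap a u (alpha k) \<in> Rpos (tgt a u)"
    using card_inversions_snoc_less[OF a uI jk(3)] by fastforce
  moreover have "wmap a u (alpha k) \<in> ZI {j, k}"
    using u by (intro word_map_ZI alpha_in_ZI) auto
  ultimately show ?thesis by (simp add: rank2_roots_iff[OF jk(1)])
qed

text \<open>Split a reduced word as \<open>v @ u\<close> with \<open>u\<close> a word in \<open>j, k\<close> and \<open>v\<close> as short as possible;
  then \<open>v\<close> stays reduced after appending either \<open>j\<close> or \<open>k\<close>, as otherwise that letter could be moved
  into \<open>u\<close>.\<close>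

lemma two_letter_suffix_decomposition:
  assumes a: "a \<in> A" and r: "reduced a (v\<^sub>0 @ u\<^sub>0)" and u\<^sub>0: "set u\<^sub>0 \<subseteq> {j, k}"
    and jk: "j \<in> I" "k \<in> I"
  obtains u v where "set u \<subseteq> {j, k}" "set v \<subseteq> I" "word_equiv a (v\<^sub>0 @ u\<^sub>0) (v @ u)"
    "length v + length u = length (v\<^sub>0 @ u\<^sub>0)" "length v \<le> length v\<^sub>0"
    "reduced a u" "reduced (tgt a u) v" "\<And>l. l \<in> {j, k} \<Longrightarrow> reduced (rho l (tgt a u)) (v @ [l])"
proof -
  let ?w = "v\<^sub>0 @ u\<^sub>0"
  define S where "S = {(u, v). set u \<subseteq> {j, k} \<and> set v \<subseteq> I \<and> word_equiv a ?w (v @ u)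
    \<and> length v + length u = length ?w}"
  have v\<^sub>0: "set v\<^sub>0 \<subseteq> I" using r unfolding reduced_def by simp
  have S\<^sub>0: "(u\<^sub>0, v\<^sub>0) \<in> S" using u\<^sub>0 v\<^sub>0 word_equiv_refl by (simp add: S_def)
  obtain uv where uv: "uv \<in> S" and least: "\<And>uv'. uv' \<in> S \<Longrightarrow> length (snd uv) \<le> length (snd uv')"
    using ex_has_least_nat[of "\<lambda>uv. uv \<in> S", OF S\<^sub>0, of "\<lambda>uv. length (snd uv)"] by blast
  obtain u v where uv_def: "uv = (u, v)" by (cases uv)
  have least: "length v \<le> length v'" if "(u', v') \<in> S" for u' v'
    using least[OF that] uv_def by simp
  have u: "set u \<subseteq> {j, k}" and v: "set v \<subseteq> I" and e: "word_equiv a ?w (v @ u)"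
    and len: "length v + length u = length ?w" using uv unfolding uv_def S_def by simp_all
  have uI: "set u \<subseteq> I" using u jk by blast
  have "reduced a (v @ u)" using reduced_equiv[OF r e] uI v len by simp
  then have ru: "reduced a u" and rv: "reduced (tgt a u) v"
    by (rule reduced_suffix, rule reduced_prefix)
  have b: "tgt a u \<in> A" using tgt_in_A[OF a uI] .
  have ext: "reduced (rho l (tgt a u)) (v @ [l])" if l: "l \<in> {j, k}" for l
  proof (rule ccontr)
    have lI: "l \<in> I" using l jk by auto
    assume "\<not> reduced (rho l (tgt a u)) (v @ [l])"
    then obtain v' where v': "set v' \<subseteq> I" "Suc (length v') = length v" "word_equiv (tgt a u) v (v' @ [l])"
      using reduced_snoc_not_reduced[OF b lI rv] by blast
    have "word_equiv a ?w (v' @ (l # u))"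
      using word_equiv_trans[OF e word_equiv_append_left[OF v'(3)]] by simp
    then have "(l # u, v') \<in> S" using u l v'(1,2) len by (simp add: S_def)
    then show False using least v'(2) by fastforce
  qed
  have "length v \<le> length v\<^sub>0" using least S\<^sub>0 .
  then show thesis by (rule that[OF u v e len _ ru rv ext])
qed

text \<open>Induction on the length, using the rank-two case for the maximal \<open>{j, k}\<close>-suffix, where
  \<open>j\<close> is the last letter of the word.\<close>

lemma reduced_snoc_pos:
  assumes "a \<in> A" "reduced a w" "k \<in> I" "reduced (rho k a) (w @ [k])"
  shows "wmap a w (alpha k) \<in> Rpos (tgt a w)"
  using assms
proof (induction "length w" arbitrary: a w k rule: less_induct)
  case less
  note a = less.prems(1) and r = less.prems(2) and k = less.prems(3) and rk = less.prems(4)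
  have wI: "set w \<subseteq> I" using r unfolding reduced_def by blast
  show ?case
  proof (cases w rule: rev_exhaust)
    case Nil
    then show ?thesis using alpha_pos_root[OF a k] by simp
  next
    case (snoc ws j)
    have j: "j \<in> I" using wI snoc by simp
    have jk: "j \<noteq> k" using reduced_snoc_last[OF a k rk] snoc by simp
    obtain u v where u: "set u \<subseteq> {j, k}" and v: "set v \<subseteq> I" and e: "word_equiv a w (v @ u)"
      and len: "length v + length u = length w" and shorter: "length v \<le> length ws"
      and ru: "reduced a u" and rv: "reduced (tgt a u) v"
      and ext: "\<And>l. l \<in> {j, k} \<Longrightarrow> reduced (rho l (tgt a u)) (v @ [l])"
      using two_letter_suffix_decomposition[OF a _ _ j k, of ws "[j]"] r snoc by auto
    let ?b = "tgt a u"
    have b: "?b \<in> A" using tgt_in_A[OF a] u j k by blast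
    have "length v < length w" using shorter snoc by simp
    then have pos_j: "wmap ?b v (alpha j) \<in> Rpos (tgt ?b v)"
      and pos_k: "wmap ?b v (alpha k) \<in> Rpos (tgt ?b v)"
      using less.hyps[OF _ b rv] ext j k by auto
    have "reduced (rho k a) (u @ [k])"
      using reduced_snoc_of_equiv[OF a k rk e v] u len j k by auto
    then have "wmap a u (alpha k) \<in> rank2_roots ?b j k"
      by (rule rank2_reduced_snoc_pos[OF a jk j k u ru])
    then have c: "wmap a u (alpha k) \<in> ZI {j, k}" "wmap a u (alpha k) \<in> Rpos ?b"
      by (simp_all add: rank2_roots_iff[OF jk])
    have "wmap a w (alpha k) = wmap ?b v (wmap a u (alpha k))"
      using e by (simp add: word_equiv_def word_map_append)
    also have "\<dots> = (\<lambda>l. wmap a u (alpha k) j * wmap ?b v (alpha j) l + wmap a u (alpha k) k * wmap ?b v (alpha k) l)"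
      by (subst ZI_pair_expansion[OF jk c(1)]) (rule int_linearD[OF int_linear_word_map])
    finally have "0 \<le> wmap a w (alpha k) l" for l
      using pos_root_nonneg[OF c(2), of j] pos_root_nonneg[OF c(2), of k]
        pos_root_nonneg[OF pos_j, of l] pos_root_nonneg[OF pos_k, of l] by simp
    then show ?thesis using pos_rootI[OF wmap_root[OF a wI alpha_root[OF a k]]] by blast
  qed
qed

theorem inversions_empty_word_equiv_Nil:
  assumes a: "a \<in> A" and w: "set w \<subseteq> I" and no_inv: "inversions a w = {}"
  shows "word_equiv a w []"
proof -
  obtain w\<^sub>0 where r: "reduced a w\<^sub>0" and e: "word_equiv a w w\<^sub>0" using reduced_exists[OF w] by blast
  have "inversions a w\<^sub>0 = {}" using e no_inv by (simp add: word_equiv_def inversions_def)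
  have "w\<^sub>0 = []"
  proof (cases w\<^sub>0 rule: rev_exhaust)
    case (snoc ws k)
    have k: "k \<in> I" and ws: "set ws \<subseteq> I" using r snoc unfolding reduced_def by auto
    let ?b = "rho k a"
    have b: "?b \<in> A" using rho_in_A[OF k a] .
    have "reduced ?b ws" using reduced_prefix[of a ws "[k]"] r snoc by simp
    moreover have "reduced (rho k ?b) (ws @ [k])" using r snoc rho_rho[OF k a] by simp
    ultimately have "wmap ?b ws (alpha k) \<in> Rpos (tgt ?b ws)" by (rule reduced_snoc_pos[OF b _ k])
    then have "alpha k \<in> inversions a w\<^sub>0"
      using alpha_inversion_snoc[OF b ws k] snoc rho_rho[OF k a] by simp
    with \<open>inversions a w\<^sub>0 = {}\<close> show ?thesis by simp
  qed
  with e show ?thesis by simp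
qed

text \<open>With \<open>w \<gamma>\<^sub>l = -\<alpha>\<^sub>l\<close>, the positive root \<open>\<beta> = \<Sum>\<^sub>l \<beta>\<^sub>l \<alpha>\<^sub>l\<close> is minus the image of
  \<open>\<Sum>\<^sub>l \<beta>\<^sub>l \<gamma>\<^sub>l\<close>, which is a root with nonnegative coordinates.\<close>

lemma pos_roots_subset_inverted_images:
  assumes a: "a \<in> A" and w: "set w \<subseteq> I"
    and neg: "\<And>k. k \<in> I \<Longrightarrow> \<exists>\<gamma>\<in>Rpos a. wmap a w \<gamma> = - alpha k"
  shows "Rpos (tgt a w) \<subseteq> (\<lambda>\<delta>. - wmap a w \<delta>) ` inversions a w"
proof
  let ?b = "tgt a w"
  have b: "?b \<in> A" using tgt_in_A[OF a w] .
  obtain \<gamma> where \<gamma>: "\<And>k. k \<in> I \<Longrightarrow> \<gamma> k \<in> Rpos a \<and> wmap a w (\<gamma> k) = - alpha k"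
    using neg by metis
  fix \<beta> assume \<beta>: "\<beta> \<in> Rpos ?b"
  define \<delta> where "\<delta> = (\<lambda>i. \<Sum>l\<in>I. \<beta> l * \<gamma> l i)"
  have "wmap a w \<delta> = (\<lambda>i. \<Sum>l\<in>I. \<beta> l * wmap a w (\<gamma> l) i)"
    unfolding \<delta>_def by (rule int_linear_sum[OF int_linear_word_map finite_I])
  also have "\<dots> = - (\<lambda>i. \<Sum>l\<in>I. \<beta> l * alpha l i)"
    using \<gamma> by (simp add: fun_eq_iff sum_negf[symmetric])
  also have "\<dots> = - \<beta>"
    using ZI_expansion[OF finite_I, of \<beta>] R_in_ZI[OF b] pos_rootD[OF \<beta>] by auto
  finally have image: "wmap a w \<delta> = - \<beta>" .
  obtain \<delta>' where "\<delta>' \<in> R a" "wmap a w \<delta>' = - \<beta>"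
    using neg_root[OF b pos_rootD[OF \<beta>]] wmap_image_R[OF a w] by (metis imageE)
  then have "\<delta> \<in> R a" using image inj_wmap[OF a w] by (metis injD)
  moreover have "0 \<le> \<delta> i" for i
    unfolding \<delta>_def
  proof (rule sum_nonneg)
    fix l assume "l \<in> I"
    then have "0 \<le> \<gamma> l i" using \<gamma> pos_root_nonneg by blast
    then show "0 \<le> \<beta> l * \<gamma> l i" using pos_root_nonneg[OF \<beta>] by simp
  qed
  ultimately have "\<delta> \<in> inversions a w"
    using image neg_not_pos_root[OF b \<beta>] by (simp add: inversions_def pos_rootI)
  then show "\<beta> \<in> (\<lambda>\<delta>. - wmap a w \<delta>) ` inversions a w"
    using image by force
qed

lemma finite_R_if_finite_weyl_morphisms:
  assumes fin: "finite (weyl_morphisms I A rho C)"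
  shows "\<exists>a\<in>A. finite (R a)"
proof -
  obtain a where a: "a \<in> A" using A_nonempty by blast
  let ?K = "{card (inversions a w) | w. set w \<subseteq> I}"
  have "?K \<subseteq> (\<lambda>(b, f, a'). card {\<alpha> \<in> Rpos a'. f \<alpha> \<notin> Rpos b}) ` weyl_morphisms I A rho C"
  proof
    fix n assume "n \<in> ?K"
    then obtain w where w: "set w \<subseteq> I" "n = card (inversions a w)" by blast
    have "(tgt a w, wmap a w, a) \<in> weyl_morphisms I A rho C"
      using a w by (auto simp: weyl_morphism_iff_word)
    moreover have "n = (\<lambda>(b, f, a'). card {\<alpha> \<in> Rpos a'. f \<alpha> \<notin> Rpos b}) (tgt a w, wmap a w, a)"
      using w by (simp add: inversions_def)
    ultimately show "n \<in> (\<lambda>(b, f, a'). card {\<alpha> \<in> Rpos a'. f \<alpha> \<notin> Rpos b}) ` weyl_morphisms I A rho C"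
      by (rule rev_image_eqI)
  qed
  then have fin_K: "finite ?K" using fin finite_surj by blast
  have "card (inversions a []) \<in> ?K" by force
  then obtain w\<^sub>0 where w\<^sub>0: "set w\<^sub>0 \<subseteq> I" "card (inversions a w\<^sub>0) = Max ?K"
    using Max_in[OF fin_K] by fastforce
  have "\<exists>\<gamma>\<in>Rpos a. wmap a w\<^sub>0 \<gamma> = - alpha k" if k: "k \<in> I" for k
    using a w\<^sub>0(1) k
  proof (cases rule: simple_root_preimage)
    case (pos \<gamma>)
    have "card (inversions a (k # w\<^sub>0)) \<in> ?K" using w\<^sub>0(1) k by force
    then have "card (inversions a (k # w\<^sub>0)) \<le> Max ?K" using Max_ge[OF fin_K] by blast
    then show ?thesis using card_inversions_Cons_pos[OF a w\<^sub>0(1) k pos] w\<^sub>0(2) by simp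
  qed blast
  then have "Rpos (tgt a w\<^sub>0) \<subseteq> (\<lambda>\<delta>. - wmap a w\<^sub>0 \<delta>) ` inversions a w\<^sub>0"
    by (rule pos_roots_subset_inverted_images[OF a w\<^sub>0(1)])
  then have "finite (Rpos (tgt a w\<^sub>0))" using finite_inversions[OF a w\<^sub>0(1)] finite_surj by blast
  then have "finite (R (tgt a w\<^sub>0))" using R_pos_neg[OF tgt_in_A[OF a w\<^sub>0(1)]] by (metis finite_Un finite_imageI)
  then show ?thesis using tgt_in_A[OF a w\<^sub>0(1)] by blast
qed

end

context cartan
begin

lemma connected_word:
  assumes "connected_cs I A rho" "a \<in> A" "b \<in> A"
  obtains w where "set w \<subseteq> I" "tgt a w = b"
proof -
  have "(a, b) \<in> {(x, rho i x) | x i. x \<in> A \<and> i \<in> I}\<^sup>*"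
    using assms unfolding connected_cs_def by blast
  then have "\<exists>w. set w \<subseteq> I \<and> tgt a w = b"
  proof (induction rule: rtrancl_induct)
    case base
    then show ?case by (auto intro: exI[of _ "[]"])
  next
    case (step b c)
    then obtain w i where "set w \<subseteq> I" "tgt a w = b" "i \<in> I" "c = rho i b" by blast
    then show ?case by (auto intro!: exI[of _ "i # w"])
  qed
  then show thesis using that by blast
qed

lemma finite_maps_into:
  assumes fin: "finite (real_roots I A rho C a)"
  shows "finite {f. \<exists>b. (a, f, b) \<in> weyl_morphisms I A rho C}"
proof -
  let ?F = "{f. \<exists>b. (a, f, b) \<in> weyl_morphisms I A rho C}"
  let ?h = "\<lambda>f :: ('i \<Rightarrow> int) \<Rightarrow> ('i \<Rightarrow> int). restrict (\<lambda>l. f (alpha l)) I"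
  have inj: "inj_on ?h ?F"
  proof (rule inj_onI)
    fix f f' assume "f \<in> ?F" "f' \<in> ?F" and e: "?h f = ?h f'"
    then obtain b w b' w' where "set w \<subseteq> I" "f = wmap b w" "set w' \<subseteq> I" "f' = wmap b' w'"
      by (auto simp: weyl_morphism_iff_word)
    moreover have "f (alpha l) = f' (alpha l)" if "l \<in> I" for l
      using fun_cong[OF e, of l] that by simp
    ultimately show "f = f'" using word_map_eqI[OF finite_I] by metis
  qed
  have "?h ` ?F \<subseteq> PiE I (\<lambda>_. real_roots I A rho C a)"
  proof
    fix g assume "g \<in> ?h ` ?F"
    then obtain f b where fb: "(a, f, b) \<in> weyl_morphisms I A rho C" "g = ?h f" by blast
    then have "b \<in> A" by (simp add: weyl_morphism_iff_word)
    then have "f (alpha l) \<in> real_roots I A rho C a" if "l \<in> I" for l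
      unfolding real_roots_def Hom_def using fb(1) that by blast
    then show "g \<in> PiE I (\<lambda>_. real_roots I A rho C a)" using fb(2) by simp
  qed
  then have "finite (?h ` ?F)" using finite_PiE[OF finite_I fin] by (rule finite_subset)
  then show ?thesis using inj by (rule finite_imageD)
qed

end

context root_sys
begin

lemma real_roots_subset_R:
  assumes a: "a \<in> A"
  shows "real_roots I A rho C a \<subseteq> R a"
proof
  fix v assume "v \<in> real_roots I A rho C a"
  then obtain b w i where "b \<in> A" "set w \<subseteq> I" "a = tgt b w" "v = wmap b w (alpha i)" "i \<in> I"
    by (auto simp: real_roots_def Hom_def weyl_morphism_iff_word)
  then show "v \<in> R a" using wmap_root alpha_root by blast
qed

lemma finite_R_connected:
  assumes "connected_cs I A rho" "a \<in> A" "b \<in> A" "finite (R a)"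
  shows "finite (R b)"
proof -
  obtain w where "set w \<subseteq> I" "tgt a w = b" using connected_word assms(1-3) .
  then show ?thesis using wmap_image_R[OF assms(2)] assms(4) by (metis finite_imageI)
qed

lemma weyl_morphism_source_unique:
  assumes "(a, f, b) \<in> weyl_morphisms I A rho C" "(a, f, b') \<in> weyl_morphisms I A rho C"
  shows "b = b'"
proof -
  obtain w w' where b: "b \<in> A" "set w \<subseteq> I" "a = tgt b w" "f = wmap b w"
    and b': "b' \<in> A" "set w' \<subseteq> I" "a = tgt b' w'" "f = wmap b' w'"
    using assms by (auto simp: weyl_morphism_iff_word)
  let ?u = "rev w' @ w"
  have u: "set ?u \<subseteq> I" using b b' by auto
  have tgt_u: "tgt b ?u = b'" using tgt_rev[OF b'(1,2)] b b' by (simp add: word_end_append)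
  have map_u: "wmap b ?u = id"
  proof
    fix v
    have "wmap b ?u v = wmap (tgt b' w') (rev w') (wmap b' w' v)"
      using b b' by (simp add: word_map_append)
    then show "wmap b ?u v = id v" using wmap_rev[OF b'(1,2)] by simp
  qed
  have "R b' = R b" using wmap_image_R[OF b(1) u] tgt_u map_u by simp
  then have "inversions b ?u = {}" by (simp add: inversions_def tgt_u map_u)
  then have "tgt b ?u = b" using inversions_empty_word_equiv_Nil[OF b(1) u] by (simp add: word_equiv_def)
  then show ?thesis using tgt_u by simp
qed

lemma finite_morphisms_into:
  assumes "finite (real_roots I A rho C a)"
  shows "finite {m \<in> weyl_morphisms I A rho C. fst m = a}" (is "finite ?M")
proof (rule finite_imageD)
  have into: "\<exists>f b. m = (a, f, b) \<and> (a, f, b) \<in> weyl_morphisms I A rho C" if "m \<in> ?M" for m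
    using that by (cases m) simp
  have "(\<lambda>m. fst (snd m)) ` ?M \<subseteq> {f. \<exists>b. (a, f, b) \<in> weyl_morphisms I A rho C}"
    using into by auto
  then show "finite ((\<lambda>m. fst (snd m)) ` ?M)" using finite_maps_into[OF assms] by (rule finite_subset)
  show "inj_on (\<lambda>m. fst (snd m)) ?M"
  proof (rule inj_onI)
    fix m m' assume "m \<in> ?M" "m' \<in> ?M" and eq: "fst (snd m) = fst (snd m')"
    obtain f b where m: "m = (a, f, b)" "(a, f, b) \<in> weyl_morphisms I A rho C"
      using into[OF \<open>m \<in> ?M\<close>] by blast
    obtain f' b' where m': "m' = (a, f', b')" "(a, f', b') \<in> weyl_morphisms I A rho C"
      using into[OF \<open>m' \<in> ?M\<close>] by blast
    have "f = f'" using eq m(1) m'(1) by simp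
    then show "m = m'" using weyl_morphism_source_unique[OF m(2)] m m' by simp
  qed
qed

lemma finite_weyl_morphisms:
  assumes con: "connected_cs I A rho" and fin: "\<forall>a\<in>A. finite (real_roots I A rho C a)"
  shows "finite (weyl_morphisms I A rho C)"
proof -
  let ?into = "\<lambda>a. {m \<in> weyl_morphisms I A rho C. fst m = a}"
  obtain a where a: "a \<in> A" using A_nonempty by blast
  have "A \<subseteq> (\<lambda>m. snd (snd m)) ` ?into a"
  proof
    fix b assume b: "b \<in> A"
    then obtain w where "set w \<subseteq> I" "tgt b w = a" using connected_word[OF con b a] by blast
    then have "(a, wmap b w, b) \<in> ?into a" using b by (auto simp: weyl_morphism_iff_word)
    then show "b \<in> (\<lambda>m. snd (snd m)) ` ?into a" by (rule rev_image_eqI) simp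
  qed
  moreover have "finite ((\<lambda>m. snd (snd m)) ` ?into a)"
    using finite_morphisms_into fin a by blast
  ultimately have "finite A" by (rule finite_subset)
  moreover have "weyl_morphisms I A rho C \<subseteq> (\<Union>b\<in>A. ?into b)"
  proof
    fix m assume m: "m \<in> weyl_morphisms I A rho C"
    obtain b f a' where "m = (b, f, a')" by (cases m)
    with m obtain w where "a' \<in> A" "set w \<subseteq> I" "b = tgt a' w"
      by (auto simp: weyl_morphism_iff_word)
    then have "fst m \<in> A" using \<open>m = (b, f, a')\<close> tgt_in_A by simp
    with m show "m \<in> (\<Union>b\<in>A. ?into b)" by blast
  qed
  ultimately show ?thesis using finite_morphisms_into fin by (meson finite_UN_I finite_subset)
qed

end

theorem lemma2p11:
  fixes I :: "'i set" and A :: "'a set" and rho :: "'i \<Rightarrow> 'a \<Rightarrow> 'a"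
    and C :: "'a \<Rightarrow> 'i \<Rightarrow> 'i \<Rightarrow> int" and R :: "'a \<Rightarrow> ('i \<Rightarrow> int) set"
  assumes "cartan_scheme I A rho C"
    and "connected_cs I A rho"
    and "root_system I A rho C R"
  shows "((\<forall>a\<in>A. finite (R a)) \<longleftrightarrow> (\<exists>a\<in>A. finite (R a)))
       \<and> ((\<exists>a\<in>A. finite (R a)) \<longleftrightarrow> (\<forall>a\<in>A. finite (real_roots I A rho C a)))
       \<and> ((\<forall>a\<in>A. finite (real_roots I A rho C a)) \<longleftrightarrow> finite (weyl_morphisms I A rho C))"
proof -
  interpret root_sys I A rho C R using assms(3) by (rule root_sys_if_root_system)
  have "(\<forall>a\<in>A. finite (R a)) \<longleftrightarrow> (\<exists>a\<in>A. finite (R a))"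
    using A_nonempty finite_R_connected[OF assms(2)] by blast
  moreover have "(\<forall>a\<in>A. finite (R a)) \<Longrightarrow> (\<forall>a\<in>A. finite (real_roots I A rho C a))"
    using real_roots_subset_R finite_subset by blast
  moreover have "(\<forall>a\<in>A. finite (real_roots I A rho C a)) \<Longrightarrow> finite (weyl_morphisms I A rho C)"
    using finite_weyl_morphisms[OF assms(2)] by blast
  moreover have "finite (weyl_morphisms I A rho C) \<Longrightarrow> (\<exists>a\<in>A. finite (R a))"
    by (rule finite_R_if_finite_weyl_morphisms)
  ultimately show ?thesis by blast
qed

end
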